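(* The positive root vectors of $U_q(\mathfrak{sp}_{2n})$ satisfy $$E_{1,2}=[E_1,E_2]_{q^2};$$ $$E_{-i,j}=[E_{-i,j-1},E_j]_q\quad\text{and}\quad E_{i,j}=[E_{i,j-1},E_j]_q\qquad(3\le i+2\le j\le n);$$ $$E_{j-1,j}=[E_{j-1},E_{j-2,j}]_q\qquad(3\le j\le n);$$ $$E_{j,j}=[2]_q^{-1}[E_{1,j},E_{-1,j}]\qquad(2\le j\le n).$$
   Context: Let $\mathbf{k}$ be a field of characteristic $0$, $q\in\mathbf{k}$ invertible, not a root of unity, $n\ge2$, $[m]_q=\frac{q^m-q^{-m}}{q-q^{-1}}$, $[m]_q!=[1]_q\cdots[m]_q$, $[A,B]_v=AB-vBA$, $[A,B]=[A,B]_1$. $U_q(\mathfrak{sp}_{2n})$ is generated by $E_i,F_i,K_i^{\pm1}$ ($1\le i\le n$) with relations $K_iK_j=K_jK_i$, $K_iK_i^{-1}=1$, $K_iE_jK_i^{-1}=q_i^{a_{ij}}E_j$, $K_iF_jK_i^{-1}=q_i^{-a_{ij}}F_j$, $[E_i,F_j]=\delta_{ij}\frac{K_i-K_i^{-1}}{q_i-q_i^{-1}}$, and quantum Serre relations; $q_1=q^2$, $q_i=q$ ($i>1$); Cartan matrix $a_{ii}=2$, $a_{12}=-1$, $a_{21}=-2$, $a_{i,i+1}=a_{i+1,i}=-1$ ($2\le i\le n-1$), $a_{ij}=0$ for $|i-j|>1$. Lusztig's automorphisms $T_i$: $T_i(K_j)=K_jK_i^{-a_{ij}}$, $T_i(E_i)=-F_iK_i^{-1}$,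 $T_i(F_i)=-K_iE_i$, and for $j\ne i$: $T_i(E_j)=\sum_{r=0}^{-a_{ij}}(-1)^rq_i^rE_i^{(-a_{ij}-r)}E_jE_i^{(r)}$, $T_i(F_j)=\sum_{r=0}^{-a_{ij}}(-1)^rq_i^{-r}F_i^{(r)}F_jF_i^{(-a_{ij}-r)}$, with $E_i^{(r)}=E_i^r/[r]_{q_i}!$, $F_i^{(r)}=F_i^r/[r]_{q_i}!$. $T_{\gamma_i}=T_iT_{i-1}\cdots T_2T_1T_2\cdots T_{i-1}T_i$. Positive root vectors: $E_{1,1}=E_1$, and for $1<j\le n$: $E_{j-1,j}=T_{\gamma_1}\cdots T_{\gamma_{j-1}}(E_j)$; $E_{i,j}=T_{\gamma_1}\cdots T_{\gamma_{j-1}}T_jT_{j-1}\cdots T_{i+2}(E_{i+1})$ for $1\le i<j-1$; $E_{j,j}=T_{\gamma_1}\cdots T_{\gamma_{j-1}}T_jT_{j-1}\cdots T_2(E_1)$; $E_{-i,j}=T_{\gamma_1}\cdots T_{\gamma_{j-1}}T_jT_{j-1}\cdots T_2T_1T_2\cdots T_i(E_{i+1})$ for $1\le i<j$. *)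

theory Defs
  imports Complex_Main
begin

definition cartan :: "nat \<Rightarrow> nat \<Rightarrow> int" where
  "cartan i j = (if i = j then 2
                 else if i = 1 \<and> j = 2 then -1
                 else if i = 2 \<and> j = 1 then -2
                 else if i = j + 1 \<or> j = i + 1 then -1
                 else 0)"

definition qi :: "'k::field \<Rightarrow> nat \<Rightarrow> 'k" where
  "qi q i = (if i = 1 then q ^ 2 else q)"

definition qnum :: "'k::field \<Rightarrow> nat \<Rightarrow> 'k" where
  "qnum v m = (v ^ m - inverse v ^ m) / (v - inverse v)"

definition qfact :: "'k::field \<Rightarrow> nat \<Rightarrow> 'k" where
  "qfact v m = (\<Prod>k\<in>{1..m}. qnum v k)"

text \<open>Scalars act on the algebra 'a through a central ring homomorphism of_k.
  Divided power x^(r) = x^r / [r]_v!.\<close>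
definition dpow :: "('k::field \<Rightarrow> 'a::ring_1) \<Rightarrow> 'k \<Rightarrow> 'a \<Rightarrow> nat \<Rightarrow> 'a" where
  "dpow of_k v x r = of_k (inverse (qfact v r)) * x ^ r"

definition Kpow :: "(nat \<Rightarrow> 'a::ring_1) \<Rightarrow> (nat \<Rightarrow> 'a) \<Rightarrow> nat \<Rightarrow> int \<Rightarrow> 'a" where
  "Kpow K Kinv i m = (if 0 \<le> m then K i ^ nat m else Kinv i ^ nat (- m))"

definition qcomm :: "('k \<Rightarrow> 'a::ring_1) \<Rightarrow> 'k \<Rightarrow> 'a \<Rightarrow> 'a \<Rightarrow> 'a" where
  "qcomm of_k v A B = A * B - of_k v * B * A"

definition Uq_relations ::
  "('k::field \<Rightarrow> 'a::ring_1) \<Rightarrow> nat \<Rightarrow> 'k \<Rightarrow> (nat \<Rightarrow> 'a) \<Rightarrow> (nat \<Rightarrow> 'a) \<Rightarrow> (nat \<Rightarrow> 'a) \<Rightarrow> (nat \<Rightarrow> 'a) \<Rightarrow> bool" where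
  "Uq_relations of_k n q E F K Kinv \<longleftrightarrow>
    (\<forall>i\<in>{1..n}. \<forall>j\<in>{1..n}.
        K i * K j = K j * K i \<and> K i * Kinv j = Kinv j * K i \<and> Kinv i * Kinv j = Kinv j * Kinv i) \<and>
    (\<forall>i\<in>{1..n}. K i * Kinv i = 1 \<and> Kinv i * K i = 1) \<and>
    (\<forall>i\<in>{1..n}. \<forall>j\<in>{1..n}. K i * E j * Kinv i = of_k (qi q i powi cartan i j) * E j) \<and>
    (\<forall>i\<in>{1..n}. \<forall>j\<in>{1..n}. K i * F j * Kinv i = of_k (qi q i powi (- cartan i j)) * F j) \<and>
    (\<forall>i\<in>{1..n}. \<forall>j\<in>{1..n}. E i * F j - F j * E i =
        (if i = j then of_k (inverse (qi q i - inverse (qi q i))) * (K i - Kinv i) else 0)) \<and>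
    (\<forall>i\<in>{1..n}. \<forall>j\<in>{1..n}. i \<noteq> j \<longrightarrow>
        (\<Sum>r = 0..nat (1 - cartan i j). of_k ((-1) ^ r) *
            dpow of_k (qi q i) (E i) (nat (1 - cartan i j) - r) * E j * dpow of_k (qi q i) (E i) r) = 0) \<and>
    (\<forall>i\<in>{1..n}. \<forall>j\<in>{1..n}. i \<noteq> j \<longrightarrow>
        (\<Sum>r = 0..nat (1 - cartan i j). of_k ((-1) ^ r) *
            dpow of_k (qi q i) (F i) (nat (1 - cartan i j) - r) * F j * dpow of_k (qi q i) (F i) r) = 0)"

definition lusztig_T ::
  "('k::field \<Rightarrow> 'a::ring_1) \<Rightarrow> nat \<Rightarrow> 'k \<Rightarrow> (nat \<Rightarrow> 'a) \<Rightarrow> (nat \<Rightarrow> 'a) \<Rightarrow> (nat \<Rightarrow> 'a) \<Rightarrow> (nat \<Rightarrow> 'a)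
     \<Rightarrow> (nat \<Rightarrow> 'a \<Rightarrow> 'a) \<Rightarrow> bool" where
  "lusztig_T of_k n q E F K Kinv T \<longleftrightarrow>
    (\<forall>i\<in>{1..n}.
       (\<forall>x y. T i (x + y) = T i x + T i y) \<and>
       (\<forall>x y. T i (x * y) = T i x * T i y) \<and>
       T i 1 = 1 \<and>
       (\<forall>c. T i (of_k c) = of_k c) \<and>
       (\<forall>j\<in>{1..n}. T i (K j) = K j * Kpow K Kinv i (- cartan i j)) \<and>
       T i (E i) = - (F i * Kinv i) \<and>
       T i (F i) = - (K i * E i) \<and>
       (\<forall>j\<in>{1..n}. j \<noteq> i \<longrightarrow>
          T i (E j) = (\<Sum>r = 0..nat (- cartan i j). of_k ((-1) ^ r * qi q i ^ r) *
              dpow of_k (qi q i) (E i) (nat (- cartan i j) - r) * E j * dpow of_k (qi q i) (E i) r)) \<and>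
       (\<forall>j\<in>{1..n}. j \<noteq> i \<longrightarrow>
          T i (F j) = (\<Sum>r = 0..nat (- cartan i j). of_k ((-1) ^ r * inverse (qi q i) ^ r) *
              dpow of_k (qi q i) (F i) r * F j * dpow of_k (qi q i) (F i) (nat (- cartan i j) - r))))"

text \<open>Words of indices; foldr T [a,b,...] x = T a (T b (... x)).
  gamma_word i encodes T_{gamma_i} = T_i T_{i-1} ... T_2 T_1 T_2 ... T_i;
  Gword m encodes T_{gamma_1} ... T_{gamma_m}.\<close>
definition gamma_word :: "nat \<Rightarrow> nat list" where
  "gamma_word i = rev [2..<i+1] @ [1] @ [2..<i+1]"

definition Gword :: "nat \<Rightarrow> nat list" where
  "Gword m = concat (map gamma_word [1..<m+1])"

text \<open>E_{i,j} for 1 \<le> i < j: covers both E_{j-1,j} (i = j-1) and the case i < j-1.\<close>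
definition Epos :: "(nat \<Rightarrow> 'a \<Rightarrow> 'a) \<Rightarrow> (nat \<Rightarrow> 'a) \<Rightarrow> nat \<Rightarrow> nat \<Rightarrow> 'a" where
  "Epos T E i j = foldr T (Gword (j - 1) @ rev [i+2..<j+1]) (E (i + 1))"

definition Ediag :: "(nat \<Rightarrow> 'a \<Rightarrow> 'a) \<Rightarrow> (nat \<Rightarrow> 'a) \<Rightarrow> nat \<Rightarrow> 'a" where
  "Ediag T E j = foldr T (Gword (j - 1) @ rev [2..<j+1]) (E 1)"

definition Eneg :: "(nat \<Rightarrow> 'a \<Rightarrow> 'a) \<Rightarrow> (nat \<Rightarrow> 'a) \<Rightarrow> nat \<Rightarrow> nat \<Rightarrow> 'a" where
  "Eneg T E i j = foldr T (Gword (j - 1) @ rev [2..<j+1] @ [1] @ [2..<i+1]) (E (i + 1))"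

end

theory Submission
  imports Defs
begin

text \<open>Each root vector is the image of a simple root vector under a word in Lusztig's T_i,
  and the T_i act on the generators by explicit formulas: T_i fixes E_j when |i - j| \<ge> 2, sends
  E_j to [E_i, E_j]_{q_i} for an adjacent j, and T_i([E_j, E_i]_{q_i}) = E_j. Writing the relevant
  vectors as nested q-commutators, the words can therefore be evaluated letter by letter; the
  recursions then follow because T_{gamma_1} ... T_{gamma_{j-2}} fixes E_j.
  The formula for E_{j-1,j} additionally needs that the word defining E_{-(j-2),j-1} fixes E_{j-1};
  this is proved by induction together with the same statement for F_{j-1} (obtained from the
  symmetry E \<leftrightarrow> F, q \<leftrightarrow> q^{-1}) and for K_{j-1} (tracked through exponent vectors of
  K-monomials). The formula for E_{j,j} comes from the rank-two computation
  T_2(E_1) = [2]^{-1} [E_2, [E_2, E_1]_{q^2}].\<close>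

datatype 'a opp = Opp (un: 'a)

instantiation opp :: (ring_1) ring_1
begin
definition zero_opp where "0 = Opp 0"
definition one_opp where "1 = Opp 1"
definition plus_opp where "x + y = Opp (un x + un y)"
definition minus_opp where "x - y = Opp (un x - un y)"
definition uminus_opp where "- x = Opp (- un x)"
definition times_opp where "x * y = Opp (un y * un x)"
instance
  by standard (auto simp: zero_opp_def one_opp_def plus_opp_def minus_opp_def uminus_opp_def times_opp_def
      algebra_simps intro!: opp.expand)
end

lemma un_0[simp]: "un 0 = 0" by (simp add: zero_opp_def)
lemma un_1[simp]: "un 1 = 1" by (simp add: one_opp_def)
lemma un_add[simp]: "un (x + y) = un x + un y" by (simp add: plus_opp_def)
lemma un_diff[simp]: "un (x - y) = un x - un y" by (simp add: minus_opp_def)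
lemma un_uminus[simp]: "un (- x) = - un x" by (simp add: uminus_opp_def)
lemma un_mult[simp]: "un (x * y) = un y * un x" by (simp add: times_opp_def)
lemma un_power[simp]: "un (x ^ k) = un x ^ k"
  by (induct k) (simp_all add: power_commutes)
lemma un_sum: "un (sum f A) = sum (\<lambda>i. un (f i)) A"
  by (induct A rule: infinite_finite_induct) simp_all
lemma opp_eq_iff: "x = y \<longleftrightarrow> un x = un y" by (cases x, cases y) simp

definition commutes :: "'a::ring_1 \<Rightarrow> 'a \<Rightarrow> bool" where "commutes x y \<longleftrightarrow> x * y = y * x"

lemma commutes_sym: "commutes x y \<Longrightarrow> commutes y x" by (simp add: commutes_def)
lemma commutes_mult: assumes "commutes x A" "commutes x B" shows "commutes x (A * B)"
proof -
  have "x * (A * B) = A * (x * B)" using assms unfolding commutes_def by (metis mult.assoc)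
  also have "\<dots> = A * B * x" using assms unfolding commutes_def by (metis mult.assoc)
  finally show ?thesis unfolding commutes_def .
qed
lemma commutes_diff: "commutes x A \<Longrightarrow> commutes x B \<Longrightarrow> commutes x (A - B)"
  unfolding commutes_def by (simp add: algebra_simps)
lemma commutes_power: "commutes x y \<Longrightarrow> commutes x (y ^ k)"
  by (induct k) (simp_all add: commutes_mult, simp add: commutes_def)

lemma qnum_inverse: "qnum (inverse v) m = qnum v m"
proof -
  have "qnum (inverse v) m = (inverse v ^ m - v ^ m) / (inverse v - v)"
    by (simp add: qnum_def)
  also have "\<dots> = (v ^ m - inverse v ^ m) / (v - inverse v)"
    by (metis minus_diff_eq minus_divide_divide)
  finally show ?thesis by (simp add: qnum_def)
qed
lemma qfact_inverse: "qfact (inverse v) m = qfact v m" by (simp add: qfact_def qnum_inverse)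
lemma qi_inverse: "qi (inverse v) i = inverse (qi v i)" by (simp add: qi_def power_inverse)

locale central_scalars =
  fixes of_k :: "'k::field \<Rightarrow> 'a::ring_1"
  assumes hom_one: "of_k 1 = 1"
    and hom_add: "\<forall>a b. of_k (a + b) = of_k a + of_k b"
    and hom_mult: "\<forall>a b. of_k (a * b) = of_k a * of_k b"
    and hom_central: "\<forall>c x. of_k c * x = x * of_k c"
begin

lemma of_k_add[simp]: "of_k (a + b) = of_k a + of_k b" using hom_add by blast
lemma of_k_mult: "of_k (a * b) = of_k a * of_k b" using hom_mult by blast
lemma of_k_0[simp]: "of_k 0 = 0"
proof -
  have "of_k 0 = of_k 0 + of_k 0" using of_k_add[of 0 0] by simp
  thus ?thesis by simp
qed
lemma of_k_1[simp]: "of_k 1 = 1" using hom_one .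
lemma of_k_uminus[simp]: "of_k (- a) = - of_k a"
proof -
  have "of_k (-a) + of_k a = 0" using of_k_add[of "-a" a] by simp
  thus ?thesis by (simp add: eq_neg_iff_add_eq_0)
qed
lemma of_k_diff[simp]: "of_k (a - b) = of_k a - of_k b"
  using of_k_add[of a "-b"] by simp
lemma of_k_commute: "of_k c * x = x * of_k c" using hom_central by blast
lemma mult_of_k_left_commute: "x * (of_k c * y) = of_k c * (x * y)"
  by (metis mult.assoc of_k_commute)
lemma of_k_mult_assoc: "of_k a * (of_k b * x) = of_k (a*b) * x"
  by (simp add: of_k_mult mult.assoc)

definition smul :: "'k \<Rightarrow> 'a \<Rightarrow> 'a" where "smul c x = of_k c * x"

lemma smul_mult[simp]: "smul c x * y = smul c (x*y)" by (simp add: smul_def mult.assoc)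
lemma mult_smul[simp]: "x * smul c y = smul c (x*y)" by (simp add: smul_def mult_of_k_left_commute)
lemma smul_smul[simp]: "smul c (smul d x) = smul (c*d) x" by (simp add: smul_def of_k_mult_assoc)
lemma smul_add[simp]: "smul c (x+y) = smul c x + smul c y" by (simp add: smul_def algebra_simps)
lemma smul_diff[simp]: "smul c (x-y) = smul c x - smul c y" by (simp add: smul_def algebra_simps)
lemma smul_minus[simp]: "smul c (-x) = - smul c x" by (simp add: smul_def algebra_simps)
lemma smul_zero[simp]: "smul c 0 = 0" "smul 0 x = 0" by (simp_all add: smul_def)
lemma smul_one[simp]: "smul 1 x = x" by (simp add: smul_def)
lemma smul_uminus_scalar[simp]: "smul (- c) x = - smul c x" by (simp add: smul_def)
lemma smul_neg_one: "smul (-1) x = - x" by (simp add: smul_def)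
lemma smul_add_scalar: "smul a x + smul b x = smul (a+b) x" by (simp add: smul_def algebra_simps)
lemma smul_diff_scalar: "smul a x - smul b x = smul (a-b) x" by (simp add: smul_def algebra_simps)
lemma of_k_mult_eq_smul: "of_k c * x = smul c x" by (simp add: smul_def)
lemma mult_of_k_eq_smul: "x * of_k c = smul c x" by (simp add: smul_def of_k_commute)

lemma commutes_smul: "commutes x A \<Longrightarrow> commutes x (smul c A)" unfolding commutes_def by simp

text \<open>qcomm in a normal form for the simplifier, with the scalar in front of the product.\<close>
definition qc :: "'k \<Rightarrow> 'a \<Rightarrow> 'a \<Rightarrow> 'a" where
  "qc v A B = A * B - smul v (B * A)"

lemma qcomm_eq_qc: "qcomm of_k v A B = qc v A B" by (simp add: qcomm_def qc_def smul_def mult.assoc)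

lemma commutes_qc: "commutes x A \<Longrightarrow> commutes x B \<Longrightarrow> commutes x (qc v A B)"
  unfolding qc_def by (intro commutes_diff commutes_smul commutes_mult)

lemma qc_assoc: assumes "commutes A C" shows "qc v (qc u A B) C = qc u A (qc v B C)"
proof -
  have "qc v (qc u A B) C = A*B*C - smul u (B*A*C) - smul v (C*A*B) + smul (v*u) (C*B*A)"
    unfolding qc_def by (simp add: algebra_simps)
  also have "\<dots> = A*B*C - smul u (B*C*A) - smul v (A*C*B) + smul (v*u) (C*B*A)"
    using assms by (simp add: commutes_def mult.assoc)
  also have "\<dots> = qc u A (qc v B C)"
    unfolding qc_def by (simp add: algebra_simps mult.commute)
  finally show ?thesis .
qed

lemma qc_left_exchange: assumes "commutes A B" shows "qc u A (qc v B C) = qc v B (qc u A C)"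
proof -
  have "qc u A (qc v B C) = A*B*C - smul v (A*C*B) - smul u (B*C*A) + smul (u*v) (C*B*A)"
    unfolding qc_def by (simp add: algebra_simps)
  also have "\<dots> = B*A*C - smul v (A*C*B) - smul u (B*C*A) + smul (u*v) (C*A*B)"
  proof -
    have m1: "A*B*C = B*A*C" using assms by (simp add: commutes_def)
    have m2: "C*B*A = C*A*B" using assms by (simp add: commutes_def mult.assoc)
    show ?thesis by (simp only: m1 m2)
  qed
  also have "\<dots> = qc v B (qc u A C)"
    unfolding qc_def by (simp add: algebra_simps mult.commute)
  finally show ?thesis .
qed

lemma qc_right_exchange: assumes "commutes B C" shows "qc u (qc v A B) C = qc v (qc u A C) B"
proof -
  have "qc u (qc v A B) C = A*B*C - smul v (B*A*C) - smul u (C*A*B) + smul (u*v) (C*B*A)"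
    unfolding qc_def by (simp add: algebra_simps)
  also have "\<dots> = A*C*B - smul v (B*A*C) - smul u (C*A*B) + smul (u*v) (B*C*A)"
  proof -
    have m1: "A*B*C = A*C*B" using assms by (simp add: commutes_def mult.assoc)
    have m2: "C*B*A = B*C*A" using assms by (simp add: commutes_def)
    show ?thesis by (simp only: m1 m2)
  qed
  also have "\<dots> = qc v (qc u A C) B"
    unfolding qc_def by (simp add: algebra_simps mult.commute)
  finally show ?thesis .
qed

definition skew_commutes :: "'a \<Rightarrow> 'a \<Rightarrow> 'k \<Rightarrow> bool" where
  "skew_commutes z x c \<longleftrightarrow> z * x = smul c (x * z)"

lemma skew_commutes_mult:
  "skew_commutes z x a \<Longrightarrow> skew_commutes z y b \<Longrightarrow>
    skew_commutes z (x * y) (a * b)"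
  unfolding skew_commutes_def by (metis smul_smul smul_mult mult_smul mult.assoc mult.commute)
lemma skew_commutes_diff:
  "skew_commutes z x a \<Longrightarrow> skew_commutes z y a \<Longrightarrow> skew_commutes z (x - y) a"
  unfolding skew_commutes_def by (simp add: algebra_simps)
lemma skew_commutes_smul: "skew_commutes z x a \<Longrightarrow> skew_commutes z (smul c x) a"
  unfolding skew_commutes_def by (simp add: mult.commute)
lemma skew_commutes_qc:
  assumes "skew_commutes z x a" "skew_commutes z y b" shows "skew_commutes z (qc v x y) (a * b)"
proof -
  have 1: "skew_commutes z (x * y) (a * b)" using assms by (rule skew_commutes_mult)
  have "skew_commutes z (y * x) (b * a)" using assms(2,1) by (rule skew_commutes_mult)
  hence 2: "skew_commutes z (smul v (y * x)) (a * b)" by (simp add: skew_commutes_smul mult.commute)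
  show ?thesis unfolding qc_def using 1 2 by (rule skew_commutes_diff)
qed

lemma serre_sum_reverse: assumes "(\<Sum>r = 0..m. of_k ((-1) ^ r) * A (m - r) * B * A r) = 0"
  shows "(\<Sum>r = 0..m. A r * B * A (m - r) * of_k ((-1) ^ r)) = 0"
proof -
  have "(\<Sum>r = 0..m. A r * B * A (m - r) * of_k ((-1) ^ r)) =
        (\<Sum>r = 0..m. A (m - r) * B * A (m - (m - r)) * of_k ((-1) ^ (m - r)))"
    by (subst sum.atLeastAtMost_rev) simp
  also have "\<dots> = (\<Sum>r = 0..m. of_k ((-1) ^ m) * (of_k ((-1) ^ r) * A (m - r) * B * A r))"
  proof (rule sum.cong)
    fix r assume "r \<in> {0..m}"
    hence rm: "r \<le> m" by simp
    have "((-1)::'k) ^ (m - r) = (-1) ^ m * (-1) ^ r"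
    proof -
      have "((-1)::'k) ^ m = (-1) ^ (m - r) * (-1) ^ r" using rm by (simp add: power_add[symmetric])
      hence "((-1)::'k) ^ m * (-1) ^ r = (-1) ^ (m - r) * ((-1) ^ r * (-1) ^ r)" by (simp add: mult.assoc)
      also have "((-1)::'k) ^ r * (-1) ^ r = 1" by (simp add: power_mult_distrib[symmetric])
      finally show ?thesis by simp
    qed
    thus "A (m - r) * B * A (m - (m - r)) * of_k ((-1) ^ (m - r)) =
        of_k ((-1) ^ m) * (of_k ((-1) ^ r) * A (m - r) * B * A r)"
      using rm by (simp add: mult_of_k_eq_smul of_k_mult_eq_smul mult.assoc mult.commute)
  qed simp
  also have "\<dots> = of_k ((-1) ^ m) * (\<Sum>r = 0..m. of_k ((-1) ^ r) * A (m - r) * B * A r)"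
    by (simp add: sum_distrib_left)
  finally show ?thesis using assms by simp
qed

definition of_k_opp :: "'k \<Rightarrow> 'a opp" where "of_k_opp c = Opp (of_k c)"

lemma un_of_k_opp[simp]: "un (of_k_opp c) = of_k c" by (simp add: of_k_opp_def)

lemma central_scalars_opposite: "central_scalars of_k_opp"
proof
  show "of_k_opp 1 = 1" by (simp add: opp_eq_iff)
  show "\<forall>a b. of_k_opp (a + b) = of_k_opp a + of_k_opp b" by (simp add: opp_eq_iff)
  show "\<forall>a b. of_k_opp (a * b) = of_k_opp a * of_k_opp b"
    by (simp add: opp_eq_iff of_k_mult[symmetric] mult.commute)
  show "\<forall>c x. of_k_opp c * x = x * of_k_opp c" by (simp add: opp_eq_iff of_k_commute)
qed

lemma dpow_opp: "un (dpow of_k_opp (inverse v) (Opp x) r) = dpow of_k v x r"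
  unfolding dpow_def by (simp add: qfact_inverse of_k_commute)

lemma dpow_opp_qi: "un (dpow of_k_opp (qi (inverse v) i) (Opp x) r) = dpow of_k (qi v i) x r"
  using dpow_opp[of "qi v i" x r] unfolding qi_inverse .

lemma serre_opposite:
  assumes "(\<Sum>r = 0..m. of_k ((-1) ^ r) * dpow of_k (qi v i) X (m - r) * Y * dpow of_k (qi v i) X r) = 0"
  shows "(\<Sum>r = 0..m. of_k_opp ((-1) ^ r) *
     dpow of_k_opp (qi (inverse v) i) (Opp X) (m - r) * Opp Y * dpow of_k_opp (qi (inverse v) i) (Opp X) r) = 0"
proof -
  have "(\<Sum>r = 0..m. dpow of_k (qi v i) X r * Y * dpow of_k (qi v i) X (m - r) * of_k ((-1) ^ r)) = 0"
    by (rule serre_sum_reverse[OF assms])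
  thus ?thesis by (simp add: opp_eq_iff un_sum dpow_opp_qi mult.assoc)
qed

end

lemma cartan_distant: "i + 2 \<le> j \<or> j + 2 \<le> i \<Longrightarrow> cartan i j = 0"
  by (auto simp: cartan_def)
lemma cartan_21: "cartan 2 1 = -2" by (simp add: cartan_def)
lemma cartan_diag: "cartan i i = 2" by (simp add: cartan_def)
lemma qi_ge2: "i \<ge> 2 \<Longrightarrow> qi q i = q" by (simp add: qi_def)
lemma qfact_0: "qfact v 0 = 1" by (simp add: qfact_def)

text \<open>The T_i are only assumed to be algebra endomorphisms with the prescribed values on
  generators.\<close>
locale uq_sp = central_scalars of_k for of_k :: "'k::field \<Rightarrow> 'a::ring_1" +
  fixes q :: 'k and n :: nat
    and E F K Kinv :: "nat \<Rightarrow> 'a"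
    and T :: "nat \<Rightarrow> 'a \<Rightarrow> 'a"
  assumes q_nz: "q \<noteq> 0"
    and q_not_root: "\<forall>m::nat. m > 0 \<longrightarrow> q ^ m \<noteq> 1"
    and n_ge: "n \<ge> 2"
    and rels: "Uq_relations of_k n q E F K Kinv"
    and lusztig: "lusztig_T of_k n q E F K Kinv T"
begin

lemma one_in: "1 \<in> {1..n}" and two_in: "2 \<in> {1..n}" using n_ge by auto

lemma q2_ne1: "q^2 \<noteq> 1" using q_not_root by auto
lemma q4_ne1: "q^4 \<noteq> 1" using q_not_root by auto
lemma qi_nonzero: "qi q i \<noteq> 0" using q_nz by (simp add: qi_def)
lemma qi_square_ne_1: "qi q i * qi q i \<noteq> 1"
proof (cases "i = 1")
  case True
  have "q^2 * q^2 = q^4" by algebra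
  thus ?thesis using True q4_ne1 by (simp add: qi_def)
next
  case False
  have "q * q = q^2" by algebra
  thus ?thesis using False q2_ne1 by (simp add: qi_def)
qed
lemma qi_minus_inverse_nonzero: "qi q i - inverse (qi q i) \<noteq> 0"
proof
  assume "qi q i - inverse (qi q i) = 0"
  hence "qi q i * qi q i = qi q i * inverse (qi q i)" by simp
  thus False using qi_square_ne_1 qi_nonzero by simp
qed
lemma qnum_qi_1: "qnum (qi q i) 1 = 1"
proof -
  have "qnum (qi q i) 1 = (qi q i - inverse (qi q i)) / (qi q i - inverse (qi q i))"
    by (simp add: qnum_def)
  thus ?thesis using qi_minus_inverse_nonzero[of i] by simp
qed
lemma qnum_qi_Suc_0: "qnum (qi q i) (Suc 0) = 1" using qnum_qi_1 by simp
lemma qfact_qi_1: "qfact (qi q i) 1 = 1" by (simp add: qfact_def qnum_qi_Suc_0)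
lemma dpow_0: "dpow of_k v x 0 = 1" by (simp add: dpow_def qfact_0)
lemma dpow_qi_Suc_0: "dpow of_k (qi q i) x (Suc 0) = x"
  by (simp only: dpow_def qfact_qi_1 One_nat_def[symmetric] power_one_right inverse_1 of_k_1 mult_1_left)

lemma K_commute: "i \<in> {1..n} \<Longrightarrow> j \<in> {1..n} \<Longrightarrow>
   K i * K j = K j * K i \<and> K i * Kinv j = Kinv j * K i \<and> Kinv i * Kinv j = Kinv j * Kinv i"
  using rels unfolding Uq_relations_def by simp
lemma K_Kinv: "i \<in> {1..n} \<Longrightarrow> K i * Kinv i = 1"
  using rels unfolding Uq_relations_def by simp
lemma Kinv_K: "i \<in> {1..n} \<Longrightarrow> Kinv i * K i = 1"
  using rels unfolding Uq_relations_def by simp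
lemma K_E_Kinv:
  "i \<in> {1..n} \<Longrightarrow> j \<in> {1..n} \<Longrightarrow>
    K i * E j * Kinv i = smul (qi q i powi cartan i j) (E j)"
  using rels unfolding Uq_relations_def smul_def by simp
lemma K_F_Kinv:
  "i \<in> {1..n} \<Longrightarrow> j \<in> {1..n} \<Longrightarrow>
    K i * F j * Kinv i = smul (qi q i powi (- cartan i j)) (F j)"
  using rels unfolding Uq_relations_def smul_def by simp
lemma E_F_commutator:
  "i \<in> {1..n} \<Longrightarrow> j \<in> {1..n} \<Longrightarrow> E i * F j - F j * E i =
        (if i = j then smul (inverse (qi q i - inverse (qi q i))) (K i - Kinv i) else 0)"
  using rels unfolding Uq_relations_def smul_def by simp
lemma serre_E:
  "i \<in> {1..n} \<Longrightarrow> j \<in> {1..n} \<Longrightarrow> i \<noteq> j \<Longrightarrow>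
        (\<Sum>r = 0..nat (1 - cartan i j). of_k ((-1) ^ r) *
            dpow of_k (qi q i) (E i) (nat (1 - cartan i j) - r) * E j * dpow of_k (qi q i) (E i) r) = 0"
  using rels unfolding Uq_relations_def by simp
lemma serre_F:
  "i \<in> {1..n} \<Longrightarrow> j \<in> {1..n} \<Longrightarrow> i \<noteq> j \<Longrightarrow>
        (\<Sum>r = 0..nat (1 - cartan i j). of_k ((-1) ^ r) *
            dpow of_k (qi q i) (F i) (nat (1 - cartan i j) - r) * F j * dpow of_k (qi q i) (F i) r) = 0"
  using rels unfolding Uq_relations_def by simp

lemma E_commute_distant: assumes "i \<in> {1..n}" "j \<in> {1..n}" "i + 2 \<le> j \<or> j + 2 \<le> i"
  shows "E i * E j = E j * E i"
proof -
  have ne: "i \<noteq> j" using assms by auto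
  have c: "cartan i j = 0" using assms cartan_distant by blast
  have "(\<Sum>r = 0..(1::nat). of_k ((-1) ^ r) *
            dpow of_k (qi q i) (E i) (1 - r) * E j * dpow of_k (qi q i) (E i) r) = 0"
    using serre_E[OF assms(1,2) ne] c by simp
  thus ?thesis by (simp add: dpow_0 dpow_qi_Suc_0)
qed

lemma T_add: "i \<in> {1..n} \<Longrightarrow> T i (x + y) = T i x + T i y"
  using lusztig unfolding lusztig_T_def by simp
lemma T_mult: "i \<in> {1..n} \<Longrightarrow> T i (x * y) = T i x * T i y"
  using lusztig unfolding lusztig_T_def by simp
lemma T_one: "i \<in> {1..n} \<Longrightarrow> T i 1 = 1"
  using lusztig unfolding lusztig_T_def by simp
lemma T_of_k: "i \<in> {1..n} \<Longrightarrow> T i (of_k c) = of_k c"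
  using lusztig unfolding lusztig_T_def by simp
lemma T_K:
  "i \<in> {1..n} \<Longrightarrow> j \<in> {1..n} \<Longrightarrow>
    T i (K j) = K j * Kpow K Kinv i (- cartan i j)"
  using lusztig unfolding lusztig_T_def by simp
lemma T_E_self: "i \<in> {1..n} \<Longrightarrow> T i (E i) = - (F i * Kinv i)"
  using lusztig unfolding lusztig_T_def by simp
lemma T_F_self: "i \<in> {1..n} \<Longrightarrow> T i (F i) = - (K i * E i)"
  using lusztig unfolding lusztig_T_def by simp
lemma T_E_other:
  "i \<in> {1..n} \<Longrightarrow> j\<in>{1..n} \<Longrightarrow> j \<noteq> i \<Longrightarrow>
          T i (E j) = (\<Sum>r = 0..nat (- cartan i j). of_k ((-1) ^ r * qi q i ^ r) *
              dpow of_k (qi q i) (E i) (nat (- cartan i j) - r) * E j * dpow of_k (qi q i) (E i) r)"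
  using lusztig unfolding lusztig_T_def by simp
lemma T_F_other:
  "i \<in> {1..n} \<Longrightarrow> j\<in>{1..n} \<Longrightarrow> j \<noteq> i \<Longrightarrow>
          T i (F j) = (\<Sum>r = 0..nat (- cartan i j). of_k ((-1) ^ r * inverse (qi q i) ^ r) *
              dpow of_k (qi q i) (F i) r * F j * dpow of_k (qi q i) (F i) (nat (- cartan i j) - r))"
  using lusztig unfolding lusztig_T_def by simp

lemma T_0: "i \<in> {1..n} \<Longrightarrow> T i 0 = 0"
  using T_add[of i 0 0] by simp
lemma T_uminus: "i \<in> {1..n} \<Longrightarrow> T i (- x) = - T i x"
  using T_add[of i x "-x"] T_0 by (simp add: eq_neg_iff_add_eq_0 add.commute)
lemma T_diff: "i \<in> {1..n} \<Longrightarrow> T i (x - y) = T i x - T i y"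
  using T_add[of i x "-y"] T_uminus by simp
lemma T_smul: "i \<in> {1..n} \<Longrightarrow> T i (smul c x) = smul c (T i x)"
  by (simp add: smul_def T_mult T_of_k)
lemma T_qc: "i \<in> {1..n} \<Longrightarrow> T i (qc v x y) = qc v (T i x) (T i y)"
  by (simp add: qc_def T_diff T_mult T_smul)
lemma T_power: "i \<in> {1..n} \<Longrightarrow> T i (x ^ m) = T i x ^ m"
  by (induct m) (simp_all add: T_one T_mult)

lemma T_E_distant: assumes "i \<in> {1..n}" "j \<in> {1..n}" "i + 2 \<le> j \<or> j + 2 \<le> i"
  shows "T i (E j) = E j"
proof -
  have ne: "j \<noteq> i" using assms by auto
  have c: "cartan i j = 0" using assms cartan_distant by blast
  show ?thesis using T_E_other[OF assms(1,2) ne] c by (simp add: dpow_0)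
qed

lemma T_E_adjacent: assumes "i \<in> {1..n}" "j \<in> {1..n}" "cartan i j = -1" "i \<noteq> j"
  shows "T i (E j) = qc (qi q i) (E i) (E j)"
proof -
  have "T i (E j) = (\<Sum>r = 0..(1::nat). of_k ((-1) ^ r * qi q i ^ r) *
              dpow of_k (qi q i) (E i) (1 - r) * E j * dpow of_k (qi q i) (E i) r)"
    using T_E_other[OF assms(1,2)] assms by simp
  thus ?thesis by (simp add: dpow_0 dpow_qi_Suc_0 qc_def smul_def mult.assoc)
qed

lemma K_E: assumes "i \<in> {1..n}" "j \<in> {1..n}"
  shows "K i * E j = smul (qi q i powi cartan i j) (E j * K i)"
proof -
  have "K i * E j = K i * E j * (Kinv i * K i)" using Kinv_K[OF assms(1)] by simp
  also have "\<dots> = (K i * E j * Kinv i) * K i" by (simp add: mult.assoc)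
  finally show ?thesis using K_E_Kinv[OF assms] by simp
qed

lemma Kinv_E: assumes "i \<in> {1..n}" "j \<in> {1..n}"
  shows "Kinv i * E j = smul (inverse (qi q i powi cartan i j)) (E j * Kinv i)"
proof -
  let ?c = "qi q i powi cartan i j"
  have cnz: "?c \<noteq> 0" using qi_nonzero by simp
  have "E j = Kinv i * (K i * E j)" using Kinv_K[OF assms(1)] by (simp add: mult.assoc[symmetric])
  also have "\<dots> = smul ?c (Kinv i * E j * K i)" using K_E[OF assms] by (simp add: mult.assoc)
  finally have e1: "E j = smul ?c (Kinv i * E j * K i)" .
  have "Kinv i * E j * K i = smul (inverse ?c) (E j)"
    using arg_cong[OF e1, of "smul (inverse ?c)"] cnz by simp
  hence "Kinv i * E j * K i * Kinv i = smul (inverse ?c) (E j * Kinv i)" by simp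
  thus ?thesis using K_Kinv[OF assms(1)] by (simp add: mult.assoc)
qed

lemma E_F_commute:
  "a \<in> {1..n} \<Longrightarrow> b \<in> {1..n} \<Longrightarrow> a \<noteq> b \<Longrightarrow>
    E b * F a = F a * E b"
  using E_F_commutator[of b a] by simp

lemma skew_commutes_Kinv_E:
  "i \<in> {1..n} \<Longrightarrow> j \<in> {1..n} \<Longrightarrow>
    skew_commutes (Kinv i) (E j) (inverse (qi q i powi cartan i j))"
  unfolding skew_commutes_def by (rule Kinv_E)

definition bracket_F :: "nat \<Rightarrow> 'a \<Rightarrow> 'a" where "bracket_F a x = x * F a - F a * x"

lemma bracket_F_mult: "bracket_F a (x * y) = x * bracket_F a y + bracket_F a x * y"
  unfolding bracket_F_def by (simp add: algebra_simps)
lemma bracket_F_diff: "bracket_F a (x - y) = bracket_F a x - bracket_F a y"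
  unfolding bracket_F_def by (simp add: algebra_simps)
lemma bracket_F_smul: "bracket_F a (smul c x) = smul c (bracket_F a x)"
  unfolding bracket_F_def by simp
lemma bracket_F_qc:
  "bracket_F a (qc v x y) = x * bracket_F a y + bracket_F a x * y - smul v (y * bracket_F a x + bracket_F a y * x)"
  unfolding qc_def by (simp add: bracket_F_diff bracket_F_smul bracket_F_mult)
lemma bracket_F_E_other:
  "a \<in> {1..n} \<Longrightarrow> b \<in> {1..n} \<Longrightarrow> a \<noteq> b \<Longrightarrow>
    bracket_F a (E b) = 0"
  unfolding bracket_F_def using E_F_commute by simp
lemma bracket_F_E_same:
  "a \<in> {1..n} \<Longrightarrow>
    bracket_F a (E a) = smul (inverse (qi q a - inverse (qi q a))) (K a - Kinv a)"
  unfolding bracket_F_def using E_F_commutator[of a a] by simp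

text \<open>Since T_a(E_a) = -F_a K_a^{-1}, this computes T_a([Y, E_a]_v) from X = T_a(Y).\<close>
lemma qc_F_Kinv:
  assumes "v \<noteq> 0" and "skew_commutes (Kinv a) X (inverse v)"
  shows "qc v X (- (F a * Kinv a)) = - (bracket_F a X * Kinv a)"
proof -
  have "qc v X (- (F a * Kinv a)) = smul v (F a * (Kinv a * X)) - X * (F a * Kinv a)"
    unfolding qc_def by (simp add: algebra_simps)
  also have "\<dots> = F a * (X * Kinv a) - X * (F a * Kinv a)"
    using assms by (simp add: skew_commutes_def)
  also have "\<dots> = - (bracket_F a X * Kinv a)" by (simp add: bracket_F_def algebra_simps)
  finally show ?thesis .
qed

lemma T_qc_E_adjacent:
  assumes a: "a \<in> {1..n}" and b: "b \<in> {1..n}" and c: "cartan a b = -1" and ne: "a \<noteq> b"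
  shows "T a (qc (qi q a) (E b) (E a)) = E b"
proof -
  define v where "v = qi q a"
  define d where "d = inverse (v - inverse v)"
  define X where "X = qc v (E a) (E b)"
  have vnz: "v \<noteq> 0" unfolding v_def using qi_nonzero .
  have vd: "v - inverse v \<noteq> 0" unfolding v_def using qi_minus_inverse_nonzero .
  have TX: "T a (E b) = X" using T_E_adjacent[OF a b c ne] by (simp add: X_def v_def[symmetric])
  have skew: "skew_commutes (Kinv a) X (inverse v)"
  proof -
    have "skew_commutes (Kinv a) X (inverse (v*v) * v)" unfolding X_def
      using skew_commutes_Kinv_E[OF a a] skew_commutes_Kinv_E[OF a b] c
      by (intro skew_commutes_qc) (simp_all add: v_def cartan_diag power2_eq_square)
    thus ?thesis using vnz by (simp add: field_simps)
  qed
  have bracket_X: "bracket_F a X = - (E b * K a)"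
  proof -
    have "bracket_F a X = smul d (K a * E b) - smul d (Kinv a * E b)
        - smul v (smul d (E b * K a) - smul d (E b * Kinv a))"
      unfolding X_def bracket_F_qc bracket_F_E_same[OF a] bracket_F_E_other[OF a b ne]
      by (simp add: d_def v_def algebra_simps)
    also have "\<dots> = smul (d * inverse v - v * d) (E b * K a)"
      using K_E[OF a b] Kinv_E[OF a b] c vnz
      by (simp add: v_def smul_diff_scalar[symmetric] mult_ac)
    also have "d * inverse v - v * d = -1"
      using vd vnz unfolding d_def by (simp add: field_simps)
    finally show ?thesis by (simp add: smul_neg_one)
  qed
  have "T a (qc v (E b) (E a)) = qc v X (- (F a * Kinv a))"
    using T_qc[OF a] TX T_E_self[OF a] by simp
  also have "\<dots> = E b"
    using qc_F_Kinv[OF vnz skew] bracket_X K_Kinv[OF a] by (simp add: mult.assoc)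
  finally show ?thesis by (simp add: v_def)
qed

declare One_nat_def [simp del]

section \<open>The double bond between the nodes 1 and 2\<close>

lemma q_minus_inverse_nonzero: "q - inverse q \<noteq> 0"
  using qi_minus_inverse_nonzero[of 2] by (simp add: qi_def)

lemma qnum_2: "qnum q 2 = q + inverse q"
proof -
  have "q^2 - inverse q ^ 2 = (q - inverse q) * (q + inverse q)" by algebra
  thus ?thesis using q_minus_inverse_nonzero by (simp add: qnum_def)
qed
lemma q_plus_inverse_nonzero: "q + inverse q \<noteq> 0"
proof
  assume "q + inverse q = 0"
  hence "q * (q + inverse q) = 0" by simp
  hence "1 + q * q = 0" using q_nz by (simp add: algebra_simps)
  hence h: "q * q = -1" by (simp add: eq_neg_iff_add_eq_0 add.commute)
  have "q^4 = (q*q)*(q*q)" by algebra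
  hence "q^4 = 1" using h by simp
  thus False using q4_ne1 by simp
qed

lemma qfact_2: "qfact q 2 = q + inverse q"
proof -
  have e: "{1..2::nat} = {1,2}" by auto
  have "qfact q 2 = qnum q 1 * qnum q 2" unfolding qfact_def e by simp
  thus ?thesis using qnum_qi_1[of 2] qnum_2 by (simp add: qi_def)
qed

lemma T2_E1: "T 2 (E 1) = smul (inverse (qnum q 2)) (qc 1 (E 2) (qc (q^2) (E 2) (E 1)))"
proof -
  define t where "t = inverse (q + inverse q)"
  have dp2: "dpow of_k q x 2 = smul t (x * x)" for x
    by (simp add: dpow_def qfact_2 t_def smul_def power2_eq_square)
  have q2: "qi q 2 = q" by (simp add: qi_def)
  have dp2': "dpow of_k q x (Suc (Suc 0)) = smul t (x * x)" for x
    using dp2 by (simp add: numeral_2_eq_2)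
  have "T 2 (E 1) = (\<Sum>r = 0..(2::nat). of_k ((-1) ^ r * q ^ r) *
              dpow of_k q (E 2) (2 - r) * E 1 * dpow of_k q (E 2) r)"
    using T_E_other[OF two_in one_in] by (simp add: cartan_def q2)
  also have "\<dots> = smul t (E 2 * (E 2 * E 1)) - smul q (E 2 * (E 1 * E 2)) + smul (q^2 * t) (E 1 * (E 2 * E 2))"
    by (simp add: numeral_2_eq_2 dp2' dpow_0 dpow_qi_Suc_0[of 2, unfolded q2] smul_def[symmetric] of_k_mult_eq_smul mult_of_k_eq_smul
       mult.assoc power2_eq_square)
  also have "smul q (E 2 * (E 1 * E 2)) = smul (t * q^2) (E 2 * (E 1 * E 2)) + smul t (E 2 * (E 1 * E 2))"
  proof -
    have h1: "(q + inverse q) * q = q^2 + 1" using q_nz by (simp add: algebra_simps power2_eq_square)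
    have h2: "t * (q + inverse q) = 1" unfolding t_def using q_plus_inverse_nonzero by simp
    have "t * q^2 + t = t * (q^2 + 1)" by (simp add: algebra_simps)
    also have "\<dots> = t * ((q + inverse q) * q)" by (simp only: h1)
    also have "\<dots> = q" using h2 by (simp add: mult.assoc[symmetric])
    finally have "q = t * q^2 + t" by simp
    thus ?thesis by (simp add: smul_add_scalar)
  qed
  finally show ?thesis unfolding qnum_2 t_def[symmetric] qc_def by (simp add: algebra_simps mult_ac)
qed

definition qdiff_inverse where "qdiff_inverse = inverse (q - inverse q)"
definition E21 where "E21 = qc (q^2) (E 2) (E 1)"

lemma bracket_F2_E2: "bracket_F 2 (E 2) = smul qdiff_inverse (K 2 - Kinv 2)"
  using bracket_F_E_same[OF two_in] by (simp add: qi_def qdiff_inverse_def)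
lemma bracket_F2_E1: "bracket_F 2 (E 1) = 0" using bracket_F_E_other[OF two_in one_in] by simp

lemma qi2_powi_cartan21:
  "qi q 2 powi cartan 2 1 = inverse (q^2)"
  by (simp add: qi_ge2 cartan_21 power_int_minus)
lemma qi2_powi_cartan21_inverse:
  "inverse (qi q 2 powi cartan 2 1) = q^2"
  by (simp add: qi_ge2 cartan_21 power_int_minus)
lemma K2E1: "K 2 * E 1 = smul (inverse (q^2)) (E 1 * K 2)"
  using K_E[OF two_in one_in, unfolded qi2_powi_cartan21] .
lemma Ki2E1: "Kinv 2 * E 1 = smul (q^2) (E 1 * Kinv 2)"
  using Kinv_E[OF two_in one_in, unfolded qi2_powi_cartan21_inverse] .
lemma K2E2: "K 2 * E 2 = smul (q^2) (E 2 * K 2)"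
  using K_E[OF two_in two_in] by (simp add: qi_ge2 cartan_diag)
lemma Ki2E2: "Kinv 2 * E 2 = smul (inverse (q^2)) (E 2 * Kinv 2)"
  using Kinv_E[OF two_in two_in] by (simp add: qi_ge2 cartan_diag)

lemma bracket_F2_E21: "bracket_F 2 E21 = - smul (q + inverse q) (E 1 * K 2)"
proof -
  have "bracket_F 2 E21 = smul qdiff_inverse (K 2 * E 1) - smul qdiff_inverse (Kinv 2 * E 1) - smul (q^2) (smul qdiff_inverse (E 1 * K 2) - smul qdiff_inverse (E 1 * Kinv 2))"
    unfolding E21_def bracket_F_qc bracket_F2_E2 bracket_F2_E1 by (simp add: algebra_simps)
  also have "\<dots> = smul (qdiff_inverse * inverse (q^2) - q^2 * qdiff_inverse) (E 1 * K 2)"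
    by (simp add: K2E1 Ki2E1 smul_diff_scalar[symmetric] mult_ac)
  also have "qdiff_inverse * inverse (q^2) - q^2 * qdiff_inverse = - (q + inverse q)"
  proof -
    have "inverse (q^2) - q^2 = - ((q - inverse q) * (q + inverse q))"
      using q_nz by (simp add: algebra_simps power2_eq_square)
    hence "qdiff_inverse * (inverse (q^2) - q^2) = - (q + inverse q)"
      unfolding qdiff_inverse_def using q_minus_inverse_nonzero by (simp add: mult.assoc[symmetric])
    thus ?thesis by (simp add: algebra_simps)
  qed
  finally show ?thesis using smul_uminus_scalar[of "q + inverse q" "E 1 * K 2"] by simp
qed

lemma skew_commutes_K2_E21: "skew_commutes (K 2) E21 1"
proof -
  have "skew_commutes (K 2) E21 (q^2 * inverse (q^2))" unfolding E21_def
    by (rule skew_commutes_qc) (simp_all add: skew_commutes_def K2E1 K2E2)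
  thus ?thesis using q_nz by simp
qed
lemma skew_commutes_Kinv2_E21: "skew_commutes (Kinv 2) E21 1"
proof -
  have "skew_commutes (Kinv 2) E21 (inverse (q^2) * q^2)" unfolding E21_def
    by (rule skew_commutes_qc) (simp_all add: skew_commutes_def Ki2E1 Ki2E2)
  thus ?thesis using q_nz by simp
qed

lemma T2_qc_E1_E2: "T 2 (qc (q^2) (E 1) (E 2)) = E21"
proof -
  define t where "t = inverse (q + inverse q)"
  define C where "C = smul t (qc 1 (E 2) E21)"
  have T2_E1_eq: "T 2 (E 1) = C" unfolding C_def t_def E21_def using T2_E1 qnum_2 by simp
  have skew_C: "skew_commutes (Kinv 2) C (inverse (q^2))"
  proof -
    have "skew_commutes (Kinv 2) (qc 1 (E 2) E21) (inverse (q^2) * 1)"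
      by (rule skew_commutes_qc) (simp_all add: skew_commutes_def Ki2E2 skew_commutes_Kinv2_E21[unfolded skew_commutes_def])
    thus ?thesis unfolding C_def by (simp add: skew_commutes_smul)
  qed
  have K2_E21: "K 2 * E21 = E21 * K 2" using skew_commutes_K2_E21 by (simp add: skew_commutes_def)
  have Kinv2_E21: "Kinv 2 * E21 = E21 * Kinv 2" using skew_commutes_Kinv2_E21 by (simp add: skew_commutes_def)
  have bracket_commutes: "bracket_F 2 (E 2) * E21 - E21 * bracket_F 2 (E 2) = 0"
    unfolding bracket_F2_E2 by (simp add: algebra_simps mult.assoc[symmetric] K2_E21 Kinv2_E21)
  have bracket_E2_E21: "E 2 * bracket_F 2 E21 - bracket_F 2 E21 * E 2 = - smul (q + inverse q) (E21 * K 2)"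
    unfolding bracket_F2_E21 by (simp add: E21_def qc_def algebra_simps K2E2)
  have bracket_C: "bracket_F 2 C = - (E21 * K 2)"
  proof -
    have "bracket_F 2 C = smul t (E 2 * bracket_F 2 E21 - bracket_F 2 E21 * E 2 + (bracket_F 2 (E 2) * E21 - E21 * bracket_F 2 (E 2)))"
      unfolding C_def bracket_F_smul bracket_F_qc by (simp add: algebra_simps)
    also have "\<dots> = smul (t * (q + inverse q)) (- (E21 * K 2))"
      by (simp add: bracket_commutes bracket_E2_E21)
    also have "t * (q + inverse q) = 1" unfolding t_def using q_plus_inverse_nonzero by simp
    finally show ?thesis by simp
  qed
  have "T 2 (qc (q^2) (E 1) (E 2)) = qc (q^2) C (- (F 2 * Kinv 2))"
    using T_qc[OF two_in] T2_E1_eq T_E_self[OF two_in] by simp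
  also have "\<dots> = E21"
    using qc_F_Kinv[OF _ skew_C] q_nz bracket_C K_Kinv[OF two_in] by (simp add: mult.assoc)
  finally show ?thesis .
qed

lemma T2_qc_qc_E1_E2_E2: "T 2 (qc 1 (qc (q^2) (E 1) (E 2)) (E 2)) = smul (q + inverse q) (E 1)"
proof -
  have TY: "T 2 (qc (q^2) (E 1) (E 2)) = E21" by (rule T2_qc_E1_E2)
  have "T 2 (qc 1 (qc (q^2) (E 1) (E 2)) (E 2)) = qc 1 E21 (- (F 2 * Kinv 2))"
    using T_qc[OF two_in] TY T_E_self[OF two_in] by simp
  also have "\<dots> = smul (q + inverse q) (E 1)"
    using qc_F_Kinv[of 1 2 E21] skew_commutes_Kinv2_E21 bracket_F2_E21 K_Kinv[OF two_in]
    by (simp add: mult.assoc)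
  finally show ?thesis .
qed

section \<open>Words in the T_i and nested q-commutators\<close>

definition Tword :: "nat list \<Rightarrow> 'a \<Rightarrow> 'a" where "Tword w x = foldr T w x"
lemma Tword_Nil[simp]: "Tword [] x = x" by (simp add: Tword_def)
lemma Tword_Cons[simp]: "Tword (i # w) x = T i (Tword w x)" by (simp add: Tword_def)
lemma Tword_append: "Tword (u @ w) x = Tword u (Tword w x)" by (simp add: Tword_def)

lemma Tword_fixed: "(\<And>k. k \<in> set w \<Longrightarrow> T k x = x) \<Longrightarrow> Tword w x = x"
  by (induct w) auto

definition valid_word :: "nat list \<Rightarrow> bool" where "valid_word w \<longleftrightarrow> set w \<subseteq> {1..n}"
lemma valid_word_Cons[simp]:
  "valid_word (i # w) \<longleftrightarrow> i \<in> {1..n} \<and> valid_word w"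
  by (auto simp: valid_word_def)
lemma valid_word_Nil[simp]: "valid_word []" by (simp add: valid_word_def)
lemma valid_word_append[simp]:
  "valid_word (u @ w) \<longleftrightarrow> valid_word u \<and> valid_word w"
  by (auto simp: valid_word_def)

lemma Tword_mult: "valid_word w \<Longrightarrow> Tword w (x * y) = Tword w x * Tword w y"
  by (induct w) (auto simp: T_mult)
lemma Tword_diff: "valid_word w \<Longrightarrow> Tword w (x - y) = Tword w x - Tword w y"
  by (induct w) (auto simp: T_diff)
lemma Tword_uminus: "valid_word w \<Longrightarrow> Tword w (- x) = - Tword w x"
  by (induct w) (auto simp: T_uminus)
lemma Tword_smul: "valid_word w \<Longrightarrow> Tword w (smul c x) = smul c (Tword w x)"
  by (induct w) (auto simp: T_smul)
lemma Tword_qc: "valid_word w \<Longrightarrow> Tword w (qc v x y) = qc v (Tword w x) (Tword w y)"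
  by (simp add: qc_def Tword_diff Tword_mult Tword_smul)

lemma commutes_E_distant:
  "i \<in> {1..n} \<Longrightarrow> j \<in> {1..n} \<Longrightarrow>
    i + 2 \<le> j \<or> j + 2 \<le> i \<Longrightarrow> commutes (E i) (E j)"
  unfolding commutes_def by (rule E_commute_distant)

fun Edesc :: "nat \<Rightarrow> nat \<Rightarrow> 'a" where
  "Edesc a b = (if a \<le> b then E a else qc q (E a) (Edesc (a - 1) b))"
declare Edesc.simps [simp del]

lemma Edesc_same: "Edesc b b = E b" by (simp add: Edesc.simps)
lemma Edesc_step:
  "b < a \<Longrightarrow> Edesc a b = qc q (E a) (Edesc (a - 1) b)"
  by (subst Edesc.simps) simp

lemma Edesc_closure: assumes "\<And>k. b \<le> k \<Longrightarrow> k \<le> a \<Longrightarrow> P (E k)"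
  and "\<And>v x y. P x \<Longrightarrow> P y \<Longrightarrow> P (qc v x y)" and "b \<le> a"
  shows "P (Edesc a b)"
  using assms
proof (induction a arbitrary: b rule: less_induct)
  case (less a)
  show ?case
  proof (cases "a = b")
    case True thus ?thesis using less by (simp add: Edesc_same)
  next
    case False
    hence "b < a" using less by simp
    thus ?thesis using less by (simp add: Edesc_step)
  qed
qed

lemma commutes_Edesc:
  "(\<And>k. b \<le> k \<Longrightarrow> k \<le> a \<Longrightarrow> commutes x (E k)) \<Longrightarrow> b \<le> a \<Longrightarrow>
    commutes x (Edesc a b)"
  by (rule Edesc_closure[where P="commutes x"]) (auto intro: commutes_qc)

lemma Tword_Edesc_fixed:
  "valid_word w \<Longrightarrow> (\<And>k. b \<le> k \<Longrightarrow> k \<le> a \<Longrightarrow> Tword w (E k) = E k) \<Longrightarrow> b \<le> a \<Longrightarrow>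
    Tword w (Edesc a b) = Edesc a b"
  by (rule Edesc_closure[where P="\<lambda>x. Tword w x = x"]) (auto simp: Tword_qc)

lemma T_Edesc_fixed:
  "i \<in> {1..n} \<Longrightarrow> (\<And>k. b \<le> k \<Longrightarrow> k \<le> a \<Longrightarrow> T i (E k) = E k) \<Longrightarrow> b \<le> a \<Longrightarrow>
    T i (Edesc a b) = Edesc a b"
  using Tword_Edesc_fixed[of "[i]" b a] by simp

lemma Edesc_split_right: assumes "1 \<le> b" "b < a" "a \<le> n"
  shows "Edesc a b = qc q (Edesc a (b+1)) (E b)"
  using assms
proof (induction a rule: less_induct)
  case (less a)
  show ?case
  proof (cases "a = b + 1")
    case True thus ?thesis by (simp add: Edesc_step Edesc_same)
  next
    case False
    hence ab: "b + 1 < a" using less by simp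
    have "Edesc a b = qc q (E a) (Edesc (a-1) b)" using less by (simp add: Edesc_step)
    also have "\<dots> = qc q (E a) (qc q (Edesc (a-1) (b+1)) (E b))" using less ab by simp
    also have "\<dots> = qc q (qc q (E a) (Edesc (a-1) (b+1))) (E b)"
      using less ab by (intro qc_assoc[symmetric] commutes_E_distant) auto
    also have "\<dots> = qc q (Edesc a (b+1)) (E b)" using ab by (simp add: Edesc_step)
    finally show ?thesis .
  qed
qed

lemma T_succ_E:
  "2 \<le> b \<Longrightarrow> b + 1 \<le> n \<Longrightarrow> T (b+1) (E b) = qc q (E (b+1)) (E b)"
  using T_E_adjacent[of "b+1" b] by (simp add: cartan_def qi_ge2)
lemma T_E_succ:
  "2 \<le> b \<Longrightarrow> b + 1 \<le> n \<Longrightarrow> T b (E (b+1)) = qc q (E b) (E (b+1))"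
  using T_E_adjacent[of b "b+1"] by (simp add: cartan_def qi_ge2)
lemma T_qc_succ:
  "2 \<le> b \<Longrightarrow> b + 1 \<le> n \<Longrightarrow> T b (qc q (E (b+1)) (E b)) = E (b+1)"
  using T_qc_E_adjacent[of b "b+1"] by (simp add: cartan_def qi_ge2)
lemma T_succ_qc:
  "2 \<le> b \<Longrightarrow> b + 1 \<le> n \<Longrightarrow> T (b+1) (qc q (E b) (E (b+1))) = E b"
  using T_qc_E_adjacent[of "b+1" b] by (simp add: cartan_def qi_ge2)

lemma T_Edesc_distant:
  "1 \<le> m \<Longrightarrow> m \<le> n \<Longrightarrow> 1 \<le> b \<Longrightarrow> b \<le> a \<Longrightarrow> a \<le> n \<Longrightarrow> m + 2 \<le> b \<or> a + 2 \<le> m \<Longrightarrow>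
    T m (Edesc a b) = Edesc a b"
  by (rule T_Edesc_fixed) (auto intro!: T_E_distant)

lemma commutes_E_Edesc:
  "1 \<le> m \<Longrightarrow> m \<le> n \<Longrightarrow> 1 \<le> b \<Longrightarrow> b \<le> a \<Longrightarrow> a \<le> n \<Longrightarrow> m + 2 \<le> b \<or> a + 2 \<le> m \<Longrightarrow>
    commutes (E m) (Edesc a b)"
  by (rule commutes_Edesc) (auto intro!: commutes_E_distant)
lemma commutes_Edesc_E:
  "1 \<le> m \<Longrightarrow> m \<le> n \<Longrightarrow> 1 \<le> b \<Longrightarrow> b \<le> a \<Longrightarrow> a \<le> n \<Longrightarrow> m + 2 \<le> b \<or> a + 2 \<le> m \<Longrightarrow>
    commutes (Edesc a b) (E m)"
  by (rule commutes_sym, rule commutes_E_Edesc)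

lemma T_Edesc_extend: assumes "2 \<le> b" "b \<le> a" "a + 1 \<le> n"
  shows "T (a+1) (Edesc a b) = Edesc (a+1) b"
proof (cases "a = b")
  case True thus ?thesis using assms by (simp add: Edesc_same Edesc_step T_succ_E)
next
  case False
  hence ba: "b < a" using assms by simp
  have "T (a+1) (Edesc a b) = qc q (qc q (E (a+1)) (E a)) (Edesc (a-1) b)"
    using assms ba by (simp add: Edesc_step T_qc T_succ_E T_Edesc_distant)
  also have "\<dots> = qc q (E (a+1)) (qc q (E a) (Edesc (a-1) b))"
    using assms ba by (intro qc_assoc commutes_E_Edesc) auto
  also have "\<dots> = Edesc (a+1) b" using ba by (simp add: Edesc_step)
  finally show ?thesis .
qed

lemma T_Edesc_shrink: assumes "2 \<le> b" "b < a" "a \<le> n" shows "T b (Edesc a b) = Edesc a (b+1)"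
proof (cases "a = b + 1")
  case True
  have "T b (Edesc a b) = T b (qc q (E (b+1)) (E b))" using True by (simp add: Edesc_step Edesc_same)
  also have "\<dots> = E (b+1)" using assms True by (simp add: T_qc_succ)
  finally show ?thesis using True by (simp add: Edesc_same)
next
  case False
  hence ba: "b + 1 < a" using assms by simp
  have e: "b + 1 + 1 = b + 2" by arith
  have "Edesc a b = qc q (qc q (Edesc a (b+2)) (E (b+1))) (E b)"
    using assms ba Edesc_split_right[of b a] Edesc_split_right[of "b+1" a, unfolded e] by simp
  also have "\<dots> = qc q (Edesc a (b+2)) (qc q (E (b+1)) (E b))"
    using assms ba by (intro qc_assoc commutes_Edesc_E) auto
  finally have eqR: "Edesc a b = qc q (Edesc a (b+2)) (qc q (E (b+1)) (E b))" .
  have bn: "b \<in> {1..n}" using assms by auto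
  have "T b (Edesc a b) = qc q (T b (Edesc a (b+2))) (T b (qc q (E (b+1)) (E b)))"
    by (subst eqR) (simp only: T_qc[OF bn])
  also have "T b (Edesc a (b+2)) = Edesc a (b+2)" using assms ba by (intro T_Edesc_distant) auto
  also have "T b (qc q (E (b+1)) (E b)) = E (b+1)" using assms ba by (intro T_qc_succ) auto
  finally show ?thesis using assms ba Edesc_split_right[of "b+1" a, unfolded e] by simp
qed

lemma T_Edesc_interior: assumes "2 \<le> b" "b < m" "m < a" "a \<le> n" shows "T m (Edesc a b) = Edesc a b"
  using assms
proof (induction "m - 1 - b" arbitrary: b)
  case 0
  hence bm: "b = m - 1" by simp
  have m3: "3 \<le> m" using 0 by simp
  have "Edesc a b = qc q (Edesc a m) (E (m-1))" using 0 bm Edesc_split_right[of b a] by simp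
  hence "T m (Edesc a b) = qc q (Edesc a (m+1)) (qc q (E m) (E (m-1)))"
    using 0 bm m3 T_Edesc_shrink[of m a] T_succ_E[of "m-1"] by (simp add: T_qc)
  also have "\<dots> = qc q (qc q (Edesc a (m+1)) (E m)) (E (m-1))"
    using 0 m3 by (intro qc_assoc[symmetric] commutes_Edesc_E) auto
  also have "\<dots> = Edesc a b" using 0 bm Edesc_split_right[of m a] Edesc_split_right[of b a] by simp
  finally show ?case .
next
  case (Suc d)
  have "Edesc a b = qc q (Edesc a (b+1)) (E b)" using Suc Edesc_split_right[of b a] by simp
  moreover have "T m (Edesc a (b+1)) = Edesc a (b+1)" using Suc by simp
  moreover have "T m (E b) = E b" using Suc by (intro T_E_distant) auto
  ultimately show ?case using Suc by (simp add: T_qc)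
qed

lemma T_Edesc_below: assumes "3 \<le> b" "b \<le> a" "a \<le> n"
  shows "T (b-1) (Edesc a b) = qc q (E (b-1)) (Edesc a b)"
proof (cases "a = b")
  case True thus ?thesis using assms T_E_succ[of "b-1"] by (simp add: Edesc_same)
next
  case False
  hence ba: "b < a" using assms by simp
  have f1: "T (b-1) (Edesc a (b+1)) = Edesc a (b+1)" using assms ba by (intro T_Edesc_distant) auto
  have f2: "T (b-1) (E b) = qc q (E (b-1)) (E b)" using assms T_E_succ[of "b-1"] by simp
  have bn: "b - 1 \<in> {1..n}" using assms by auto
  have "T (b-1) (Edesc a b) = qc q (Edesc a (b+1)) (qc q (E (b-1)) (E b))"
    using assms ba Edesc_split_right[of b a] by (simp add: T_qc[OF bn] f1 f2)
  also have "\<dots> = qc q (E (b-1)) (qc q (Edesc a (b+1)) (E b))"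
    using assms ba by (intro qc_left_exchange commutes_Edesc_E) auto
  also have "\<dots> = qc q (E (b-1)) (Edesc a b)" using assms ba Edesc_split_right[of b a] by simp
  finally show ?thesis .
qed

function Easc :: "nat \<Rightarrow> nat \<Rightarrow> 'a" where
  "Easc b a = (if a \<le> b then E b else qc q (E b) (Easc (Suc b) a))"
  by auto
termination by (relation "measure (\<lambda>(b,a). a - b)") auto
declare Easc.simps [simp del]

lemma Easc_same: "Easc b b = E b" by (simp add: Easc.simps)
lemma Easc_step:
  "b < a \<Longrightarrow> Easc b a = qc q (E b) (Easc (b+1) a)"
  by (subst Easc.simps) (simp add: Suc_eq_plus1)

lemma Easc_closure: assumes "\<And>k. b \<le> k \<Longrightarrow> k \<le> a \<Longrightarrow> P (E k)"
  and "\<And>v x y. P x \<Longrightarrow> P y \<Longrightarrow> P (qc v x y)" and "b \<le> a"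
  shows "P (Easc b a)"
  using assms
proof (induction "a - b" arbitrary: b)
  case 0 thus ?case by (simp add: Easc_same)
next
  case (Suc d)
  hence "b < a" by simp
  thus ?case using Suc by (simp add: Easc_step)
qed

lemma commutes_Easc:
  "(\<And>k. b \<le> k \<Longrightarrow> k \<le> a \<Longrightarrow> commutes x (E k)) \<Longrightarrow> b \<le> a \<Longrightarrow>
    commutes x (Easc b a)"
  by (rule Easc_closure[where P="commutes x"]) (auto intro: commutes_qc)
lemma Tword_Easc_fixed:
  "valid_word w \<Longrightarrow> (\<And>k. b \<le> k \<Longrightarrow> k \<le> a \<Longrightarrow> Tword w (E k) = E k) \<Longrightarrow> b \<le> a \<Longrightarrow>
    Tword w (Easc b a) = Easc b a"
  by (rule Easc_closure[where P="\<lambda>x. Tword w x = x"]) (auto simp: Tword_qc)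
lemma T_Easc_fixed:
  "i \<in> {1..n} \<Longrightarrow> (\<And>k. b \<le> k \<Longrightarrow> k \<le> a \<Longrightarrow> T i (E k) = E k) \<Longrightarrow> b \<le> a \<Longrightarrow>
    T i (Easc b a) = Easc b a"
  using Tword_Easc_fixed[of "[i]" b a] by simp

lemma commutes_E_Easc:
  "1 \<le> m \<Longrightarrow> m \<le> n \<Longrightarrow> 1 \<le> b \<Longrightarrow> b \<le> a \<Longrightarrow> a \<le> n \<Longrightarrow> m + 2 \<le> b \<or> a + 2 \<le> m \<Longrightarrow>
    commutes (E m) (Easc b a)"
  by (rule commutes_Easc) (auto intro!: commutes_E_distant)
lemma commutes_Easc_E:
  "1 \<le> m \<Longrightarrow> m \<le> n \<Longrightarrow> 1 \<le> b \<Longrightarrow> b \<le> a \<Longrightarrow> a \<le> n \<Longrightarrow> m + 2 \<le> b \<or> a + 2 \<le> m \<Longrightarrow>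
    commutes (Easc b a) (E m)"
  by (rule commutes_sym, rule commutes_E_Easc)
lemma T_Easc_distant:
  "1 \<le> m \<Longrightarrow> m \<le> n \<Longrightarrow> 1 \<le> b \<Longrightarrow> b \<le> a \<Longrightarrow> a \<le> n \<Longrightarrow> m + 2 \<le> b \<or> a + 2 \<le> m \<Longrightarrow>
    T m (Easc b a) = Easc b a"
  by (rule T_Easc_fixed) (auto intro!: T_E_distant)

lemma Easc_split_right: assumes "1 \<le> b" "b < a" "a \<le> n" shows "Easc b a = qc q (Easc b (a-1)) (E a)"
  using assms
proof (induction "a - b" arbitrary: b)
  case 0 thus ?case by simp
next
  case (Suc d)
  show ?case
  proof (cases "a = b + 1")
    case True thus ?thesis by (simp add: Easc_step Easc_same)
  next
    case False
    hence ab: "b + 1 < a" using Suc by simp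
    have "Easc b a = qc q (E b) (Easc (b+1) a)" using Suc by (simp add: Easc_step)
    also have "\<dots> = qc q (E b) (qc q (Easc (b+1) (a-1)) (E a))" using Suc ab by simp
    also have "\<dots> = qc q (qc q (E b) (Easc (b+1) (a-1))) (E a)"
      using Suc ab by (intro qc_assoc[symmetric] commutes_E_distant) auto
    also have "\<dots> = qc q (Easc b (a-1)) (E a)" using ab by (simp add: Easc_step)
    finally show ?thesis .
  qed
qed

lemma T_Easc_extend: assumes "3 \<le> b" "b \<le> a" "a \<le> n" shows "T (b-1) (Easc b a) = Easc (b-1) a"
proof (cases "a = b")
  case True thus ?thesis using assms T_E_succ[of "b-1"] by (simp add: Easc_same Easc_step)
next
  case False
  hence ba: "b < a" using assms by simp
  have bn: "b - 1 \<in> {1..n}" using assms by auto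
  have f1: "T (b-1) (Easc (b+1) a) = Easc (b+1) a" using assms ba by (intro T_Easc_distant) auto
  have f2: "T (b-1) (E b) = qc q (E (b-1)) (E b)" using assms T_E_succ[of "b-1"] by simp
  have "T (b-1) (Easc b a) = qc q (qc q (E (b-1)) (E b)) (Easc (b+1) a)"
    using ba by (simp add: Easc_step T_qc[OF bn] f1 f2)
  also have "\<dots> = qc q (E (b-1)) (qc q (E b) (Easc (b+1) a))"
    using assms ba by (intro qc_assoc commutes_E_Easc) auto
  also have "\<dots> = Easc (b-1) a" using assms ba by (simp add: Easc_step)
  finally show ?thesis .
qed

lemma T_Easc_shrink: assumes "2 \<le> b" "b < a" "a \<le> n" shows "T a (Easc b a) = Easc b (a-1)"
proof (cases "a = b + 1")
  case True
  have "T a (Easc b a) = T (b+1) (qc q (E b) (E (b+1)))" using True by (simp add: Easc_step Easc_same)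
  also have "\<dots> = E b" using assms True by (simp add: T_succ_qc)
  finally show ?thesis using True by (simp add: Easc_same)
next
  case False
  hence ba: "b + 1 < a" using assms by simp
  have an: "a \<in> {1..n}" using assms by auto
  have e: "a - 1 - 1 = a - 2" by arith
  have "Easc b a = qc q (qc q (Easc b (a-2)) (E (a-1))) (E a)"
    using assms ba Easc_split_right[of b a] Easc_split_right[of b "a-1", unfolded e] by simp
  also have "\<dots> = qc q (Easc b (a-2)) (qc q (E (a-1)) (E a))"
    using assms ba by (intro qc_assoc commutes_Easc_E) auto
  finally have eqS: "Easc b a = qc q (Easc b (a-2)) (qc q (E (a-1)) (E a))" .
  have "T a (Easc b a) = qc q (T a (Easc b (a-2))) (T a (qc q (E (a-1)) (E a)))"
    by (subst eqS) (simp only: T_qc[OF an])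
  also have "T a (Easc b (a-2)) = Easc b (a-2)" using assms ba by (intro T_Easc_distant) auto
  also have "T a (qc q (E (a-1)) (E a)) = E (a-1)" using assms ba T_succ_qc[of "a-1"] by simp
  finally show ?thesis using assms ba Easc_split_right[of b "a-1", unfolded e] by simp
qed

lemma T_Easc_interior: assumes "2 \<le> b" "b < m" "m < a" "a \<le> n" shows "T m (Easc b a) = Easc b a"
  using assms
proof (induction "m - 1 - b" arbitrary: b)
  case 0
  hence bm: "b = m - 1" by simp
  have m3: "3 \<le> m" using 0 by simp
  have mn: "m \<in> {1..n}" using 0 by auto
  have "Easc b a = qc q (E (m-1)) (qc q (E m) (Easc (m+1) a))" using 0 bm by (simp add: Easc_step)
  also have "\<dots> = qc q (qc q (E (m-1)) (E m)) (Easc (m+1) a)"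
    using 0 m3 by (intro qc_assoc[symmetric] commutes_E_Easc) auto
  finally have eqS: "Easc b a = qc q (qc q (E (m-1)) (E m)) (Easc (m+1) a)" .
  have "T m (Easc b a) = qc q (T m (qc q (E (m-1)) (E m))) (T m (Easc (m+1) a))"
    by (subst eqS) (simp only: T_qc[OF mn])
  also have "T m (qc q (E (m-1)) (E m)) = E (m-1)" using 0 m3 T_succ_qc[of "m-1"] by simp
  also have "T m (Easc (m+1) a) = Easc m a" using 0 m3 T_Easc_extend[of "m+1" a] by simp
  finally show ?case using 0 bm by (simp add: Easc_step)
next
  case (Suc d)
  have bn: "m \<in> {1..n}" using Suc by auto
  have "Easc b a = qc q (E b) (Easc (b+1) a)" using Suc by (simp add: Easc_step)
  moreover have "T m (Easc (b+1) a) = Easc (b+1) a" using Suc by simp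
  moreover have "T m (E b) = E b" using Suc by (intro T_E_distant) auto
  ultimately show ?case using Suc by (simp add: T_qc[OF bn])
qed

declare Suc_eq_plus1 [symmetric, simp]

lemma Tword_upt_fixed:
  "(\<And>k. a \<le> k \<Longrightarrow> k < b \<Longrightarrow> T k x = x) \<Longrightarrow>
    Tword [a..<b] x = x"
  by (rule Tword_fixed) auto
lemma Tword_rev_upt_fixed:
  "(\<And>k. a \<le> k \<Longrightarrow> k < b \<Longrightarrow> T k x = x) \<Longrightarrow>
    Tword (rev [a..<b]) x = x"
  by (rule Tword_fixed) auto

lemma upt_split: "a \<le> m \<Longrightarrow> m \<le> b \<Longrightarrow> [a..<b] = [a..<m] @ [m..<b]"
  by (metis le_Suc_ex upt_add_eq_append)
lemma rev_upt_split:
  "a \<le> m \<Longrightarrow> m \<le> b \<Longrightarrow> rev [a..<b] = rev [m..<b] @ rev [a..<m]"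
  by (simp add: upt_split[of a m b])

lemma set_gamma_word: "k' \<in> set (gamma_word k) \<Longrightarrow> 1 \<le> k' \<and> k' \<le> max 1 k"
  by (auto simp: gamma_word_def)
lemma Gword_Suc: "Gword (Suc m) = Gword m @ gamma_word (Suc m)"
  by (simp add: Gword_def)
lemma set_Gword: "k \<in> set (Gword m) \<Longrightarrow> 1 \<le> k \<and> k \<le> m"
proof (induction m)
  case 0 thus ?case by (simp add: Gword_def)
next
  case (Suc m) thus ?case using set_gamma_word[of k "Suc m"] by (auto simp: Gword_Suc)
qed
lemma valid_gamma_word:
  "k \<le> n \<Longrightarrow> valid_word (gamma_word k)"
  using n_ge set_gamma_word by (force simp: valid_word_def)
lemma valid_Gword:
  "m \<le> n \<Longrightarrow> valid_word (Gword m)"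
  using set_Gword by (force simp: valid_word_def)
lemma Tword_gamma_word: "Tword (gamma_word k) x = Tword (rev [2..<k+1]) (T 1 (Tword [2..<k+1] x))"
  by (simp add: gamma_word_def Tword_append del: upt_Suc)
lemma Tword_gamma_word_pred:
  "1 \<le> j \<Longrightarrow> Tword (gamma_word (j-1)) x = Tword (rev [2..<j]) (T 1 (Tword [2..<j] x))"
  using Tword_gamma_word[of "j-1" x] by (simp del: upt_Suc)

lemma Tword_Gword_E_fixed: assumes "m + 2 \<le> j" "j \<le> n" shows "Tword (Gword m) (E j) = E j"
proof (rule Tword_fixed)
  fix k assume "k \<in> set (Gword m)"
  hence "1 \<le> k" "k \<le> m" using set_Gword by auto
  thus "T k (E j) = E j" using assms by (intro T_E_distant) auto
qed

lemma Tword_gamma_Edesc: assumes "1 \<le> i" "i + 2 \<le> j" "j \<le> n"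
  shows "Tword (gamma_word (j-1)) (Edesc j (i+1)) = qc q (Edesc (j-1) (i+1)) (E j)"
proof -
  have j1: "j - 1 + 1 = j" using assms by simp
  have s1: "Tword [i+2..<j] (Edesc j (i+1)) = Edesc j (i+1)"
    using assms by (intro Tword_upt_fixed T_Edesc_interior) auto
  have s2: "T (i+1) (Edesc j (i+1)) = Edesc j (i+2)" using assms T_Edesc_shrink[of "i+1" j] by simp
  have s3: "Tword [2..<i+1] (Edesc j (i+2)) = Edesc j (i+2)"
    using assms by (intro Tword_upt_fixed T_Edesc_distant) auto
  have A: "Tword [2..<j] (Edesc j (i+1)) = Edesc j (i+2)"
  proof -
    have "[2..<j] = [2..<i+1] @ [i+1] @ [i+2..<j]" using assms
      by (metis Suc_eq_plus1 add_2_eq_Suc' append_Cons append_Nil le_add2 le_trans upt_conv_Cons upt_split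
          less_add_Suc1 add.commute le_add_diff_inverse2 nat_add_left_cancel_le Suc_le_eq)
    thus ?thesis using s1 s2 s3 by (simp add: Tword_append)
  qed
  have B: "T 1 (Edesc j (i+2)) = Edesc j (i+2)" using assms by (intro T_Edesc_distant) auto
  have C0: "Tword (rev [2..<i+1]) (Edesc j (i+2)) = Edesc j (i+2)"
    using assms by (intro Tword_rev_upt_fixed T_Edesc_distant) auto
  have C: "Tword (rev [i+1..<m+1]) (Edesc j (i+2)) = qc q (Edesc m (i+1)) (Edesc j (m+1))"
    if "i+1 \<le> m" "m \<le> j-1" for m
    using that
  proof (induction m)
    case 0 thus ?case by simp
  next
    case (Suc m)
    show ?case
    proof (cases "m = i")
      case True
      have "T (i+1) (Edesc j (i+2)) = qc q (E (i+1)) (Edesc j (i+2))"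
        using assms T_Edesc_below[of "i+2" j] by simp
      thus ?thesis using True by (simp add: Edesc_same)
    next
      case False
      hence m: "i + 1 \<le> m" using Suc by simp
      have "Tword (rev [i+1..<Suc m+1]) (Edesc j (i+2)) = T (m+1) (qc q (Edesc m (i+1)) (Edesc j (m+1)))"
        using Suc m by simp
      also have "\<dots> = qc q (Edesc (m+1) (i+1)) (Edesc j (m+2))"
        using Suc m assms T_Edesc_extend[of "i+1" m] T_Edesc_shrink[of "m+1" j] by (simp add: T_qc)
      finally show ?thesis by simp
    qed
  qed
  have "Tword (gamma_word (j-1)) (Edesc j (i+1)) = Tword (rev [2..<j]) (Edesc j (i+2))"
    using A B assms by (simp add: Tword_gamma_word_pred del: upt_Suc)
  also have "\<dots> = Tword (rev [i+1..<j]) (Edesc j (i+2))"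
    using assms C0 rev_upt_split[of 2 "i+1" j] by (simp add: Tword_append)
  also have "\<dots> = qc q (Edesc (j-1) (i+1)) (E j)"
    using C[of "j-1"] assms j1 by (simp add: Edesc_same)
  finally show ?thesis .
qed

lemma upt_split3: "a \<le> m \<Longrightarrow> m < b \<Longrightarrow> [a..<b] = [a..<m] @ m # [Suc m..<b]"
  using upt_split[of a m b] upt_conv_Cons[of m b] by simp

lemma T1_E2: "T 1 (E 2) = qc (q^2) (E 1) (E 2)"
  using T_E_adjacent[OF one_in two_in] by (simp add: cartan_def qi_def)
lemma T1_qc_E2_E1: "T 1 (qc (q^2) (E 2) (E 1)) = E 2"
  using T_qc_E_adjacent[OF one_in two_in] by (simp add: cartan_def qi_def)

lemma Tword_gamma_E_fixed: assumes "1 \<le> m" "m + 1 \<le> k" "k \<le> n"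
  shows "Tword (gamma_word k) (E m) = E m"
proof (cases "m = 1")
  case True
  define t where "t = inverse (q + inverse q)"
  have k2: "2 \<le> k" using assms True by simp
  have "Tword [2..<k+1] (E 1) = T 2 (Tword [3..<k+1] (E 1))"
    using k2 upt_conv_Cons[of 2 "k+1"] by (simp add: numeral_3_eq_3 del: upt_Suc)
  also have "Tword [3..<k+1] (E 1) = E 1" using assms by (intro Tword_upt_fixed T_E_distant) auto
  also have "T 2 (E 1) = smul t (qc 1 (E 2) E21)" using T2_E1 qnum_2 by (simp add: t_def E21_def)
  finally have a1: "Tword [2..<k+1] (E 1) = smul t (qc 1 (E 2) E21)" .
  have a2: "T 1 (smul t (qc 1 (E 2) E21)) = smul t (qc 1 (qc (q^2) (E 1) (E 2)) (E 2))"
    using one_in by (simp add: T_smul T_qc T1_E2 E21_def T1_qc_E2_E1)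
  have a3: "T 2 (smul t (qc 1 (qc (q^2) (E 1) (E 2)) (E 2))) = E 1"
    using two_in T2_qc_qc_E1_E2_E2 q_plus_inverse_nonzero by (simp add: T_smul t_def)
  have "Tword (rev [2..<k+1]) (smul t (qc 1 (qc (q^2) (E 1) (E 2)) (E 2))) = Tword (rev [3..<k+1]) (E 1)"
  proof -
    have "[2..<k+1] = 2 # [3..<k+1]"
      using k2 upt_conv_Cons[of 2 "k+1"] by (simp add: numeral_3_eq_3 del: upt_Suc)
    hence "rev [2..<k+1] = rev [3..<k+1] @ [2]" by simp
    thus ?thesis using a3 by (simp add: Tword_append del: upt_Suc)
  qed
  also have "\<dots> = E 1" using assms by (intro Tword_rev_upt_fixed T_E_distant) auto
  finally show ?thesis using True a1 a2 by (simp add: Tword_gamma_word del: upt_Suc)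
next
  case False
  hence m2: "2 \<le> m" using assms by simp
  have w1: "[2..<k+1] = [2..<m] @ m # (m+1) # [m+2..<k+1]"
    using assms m2 upt_split3[of 2 m "k+1"] upt_conv_Cons[of "m+1" "k+1"] by simp
  have b1: "Tword [m+2..<k+1] (E m) = E m" using assms by (intro Tword_upt_fixed T_E_distant) auto
  have b2: "T (m+1) (E m) = Edesc (m+1) m" using assms m2 T_succ_E[of m] by (simp add: Edesc_step Edesc_same)
  have b3: "T m (Edesc (m+1) m) = E (m+1)" using assms m2 T_Edesc_shrink[of m "m+1"] by (simp add: Edesc_same)
  have b4: "Tword [2..<m] (E (m+1)) = E (m+1)" using assms by (intro Tword_upt_fixed T_E_distant) auto
  have A: "Tword [2..<k+1] (E m) = E (m+1)"
    unfolding w1 using b1 b2 b3 b4 by (simp add: Tword_append del: upt_Suc)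
  have B: "T 1 (E (m+1)) = E (m+1)" using assms m2 by (intro T_E_distant) auto
  have c1: "Tword (rev [2..<m]) (E (m+1)) = E (m+1)"
    using assms by (intro Tword_rev_upt_fixed T_E_distant) auto
  have c2: "T m (E (m+1)) = qc q (E m) (E (m+1))" using assms m2 T_E_succ[of m] by simp
  have c3: "T (m+1) (qc q (E m) (E (m+1))) = E m" using assms m2 T_succ_qc[of m] by simp
  have c4: "Tword (rev [m+2..<k+1]) (E m) = E m" using assms by (intro Tword_rev_upt_fixed T_E_distant) auto
  have C: "Tword (rev [2..<k+1]) (E (m+1)) = E m"
    unfolding w1 using c1 c2 c3 c4 by (simp add: Tword_append del: upt_Suc)
  show ?thesis using A B C by (simp add: Tword_gamma_word del: upt_Suc)
qed

lemma Tword_upt_Easc: assumes "1 \<le> i" "i + 1 \<le> n" "2 \<le> b" "b \<le> i + 1"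
  shows "Tword [b..<i+1] (E (i+1)) = Easc b (i+1)"
  using assms
proof (induction "i + 1 - b" arbitrary: b)
  case 0 hence "b = i + 1" by simp
  thus ?case by (simp add: Easc_same del: upt_Suc)
next
  case (Suc d)
  hence bi: "b < i + 1" by simp
  have "[b..<i+1] = b # [b+1..<i+1]" using bi upt_conv_Cons by simp
  hence "Tword [b..<i+1] (E (i+1)) = T b (Easc (b+1) (i+1))" using Suc by (simp del: upt_Suc)
  also have "\<dots> = Easc b (i+1)" using Suc bi T_Easc_extend[of "b+1" "i+1"] by simp
  finally show ?case .
qed

definition Eneg_core :: "nat \<Rightarrow> 'a" where "Eneg_core i = T 1 (Tword [2..<i+1] (E (i+1)))"

lemma Eneg_core_1: "Eneg_core 1 = qc (q^2) (E 1) (E 2)"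
  unfolding Eneg_core_def by (simp add: T1_E2)

lemma Eneg_core_ge_2: assumes "2 \<le> i" "i + 1 \<le> n"
  shows "Eneg_core i = qc q (qc (q^2) (E 1) (E 2)) (Easc 3 (i+1))"
proof -
  have "Eneg_core i = T 1 (Easc 2 (i+1))" unfolding Eneg_core_def using assms Tword_upt_Easc[of i 2] by simp
  also have "Easc 2 (i+1) = qc q (E 2) (Easc 3 (i+1))"
    using assms Easc_step[of 2 "i+1"] by (simp add: numeral_3_eq_3)
  also have "T 1 (qc q (E 2) (Easc 3 (i+1))) = qc q (qc (q^2) (E 1) (E 2)) (Easc 3 (i+1))"
    using assms one_in by (simp add: T_qc T1_E2 T_Easc_distant)
  finally show ?thesis .
qed

text \<open>The value of T_m ... T_2 T_1 T_2 ... T_i (E_{i+1}) for m \<ge> 2.\<close>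
definition Eneg_partial :: "nat \<Rightarrow> nat \<Rightarrow> 'a" where
  "Eneg_partial i m = (if i = 1 then qc (q^2) (Edesc m 2) (E 1)
              else qc q (qc (q^2) (Edesc m 2) (E 1)) (if m \<le> i then Easc 2 (i+1) else Easc 2 i))"

lemma Tword_rev_upt_Eneg_core: assumes "1 \<le> i" "i + 1 \<le> n" "2 \<le> m" "m \<le> n"
  shows "Tword (rev [2..<m+1]) (Eneg_core i) = Eneg_partial i m"
  using assms
proof (induction m)
  case 0 thus ?case by simp
next
  case (Suc m)
  show ?case
  proof (cases "m = 1")
    case True
    have e: "rev [2..<Suc m + 1] = [2]" using True by (simp add: upt_rec)
    show ?thesis
    proof (cases "i = 1")
      case True
      thus ?thesis
        using `m = 1` by (simp add: e Eneg_core_1 T2_qc_E1_E2[unfolded E21_def] Eneg_partial_def Edesc_same)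
    next
      case False
      hence i2: "2 \<le> i" using Suc by simp
      have "T 2 (Eneg_core i) = qc q E21 (Easc 2 (i+1))"
        using Suc i2 two_in Eneg_core_ge_2[of i] T2_qc_E1_E2 T_Easc_extend[of 3 "i+1"] by (simp add: T_qc)
      thus ?thesis using `m = 1` False i2 by (simp add: e E21_def Eneg_partial_def Edesc_same)
    qed
  next
    case False
    hence m2: "2 \<le> m" using Suc by simp
    have mn: "Suc m \<in> {1..n}" using Suc by simp
    have IH: "Tword (rev [2..<m+1]) (Eneg_core i) = Eneg_partial i m" using Suc m2 by simp
    have "Tword (rev [2..<Suc m+1]) (Eneg_core i) = T (Suc m) (Eneg_partial i m)" using IH m2 by simp
    also have "\<dots> = Eneg_partial i (Suc m)"
    proof -
      have r: "T (Suc m) (qc (q^2) (Edesc m 2) (E 1)) = qc (q^2) (Edesc (Suc m) 2) (E 1)"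
        using Suc m2 T_Edesc_extend[of 2 m] T_E_distant[of "Suc m" 1] mn by (simp add: T_qc)
      show ?thesis
      proof (cases "i = 1")
        case True thus ?thesis using r by (simp add: Eneg_partial_def)
      next
        case False
        hence i2: "2 \<le> i" using Suc by simp
        have s: "T (Suc m) (if m \<le> i then Easc 2 (i+1) else Easc 2 i) = (if Suc m \<le> i then Easc 2 (i+1) else Easc 2 i)"
        proof -
          consider "Suc m \<le> i" | "Suc m = i + 1" | "i + 2 \<le> Suc m" by linarith
          thus ?thesis
          proof cases
            case 1 thus ?thesis using Suc m2 T_Easc_interior[of 2 "Suc m" "i+1"] by simp
          next
            case 2 thus ?thesis using Suc m2 T_Easc_shrink[of 2 "i+1"] by simp
          next
            case 3 thus ?thesis using Suc m2 i2 T_Easc_distant[of "Suc m" 2 i] by simp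
          qed
        qed
        have u1: "Eneg_partial i m = qc q (qc (q^2) (Edesc m 2) (E 1)) (if m \<le> i then Easc 2 (i+1) else Easc 2 i)"
          unfolding Eneg_partial_def by (rule if_not_P[OF False])
        have u2: "Eneg_partial i (Suc m) = qc q (qc (q^2) (Edesc (Suc m) 2) (E 1)) (if Suc m \<le> i then Easc 2 (i+1) else Easc 2 i)"
          unfolding Eneg_partial_def by (rule if_not_P[OF False])
        show ?thesis by (simp only: u1 u2, subst T_qc[OF mn], simp only: r s)
      qed
    qed
    finally show ?thesis .
  qed
qed

lemma Tword_Eneg_partial: assumes "1 \<le> i" "i + 2 \<le> j" "j \<le> n"
  shows "Tword (rev [2..<j] @ [1] @ [2..<i+1]) (E (i+1)) = Eneg_partial i (j-1)"
proof -
  have "Tword (rev [2..<j] @ [1] @ [2..<i+1]) (E (i+1)) = Tword (rev [2..<j-1+1]) (Eneg_core i)"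
    using assms by (simp add: Tword_append Eneg_core_def del: upt_Suc)
  also have "\<dots> = Eneg_partial i (j-1)" using assms by (intro Tword_rev_upt_Eneg_core) auto
  finally show ?thesis .
qed

lemma Tword_gamma_Eneg_partial: assumes "1 \<le> i" "i + 2 \<le> j" "j \<le> n"
  shows "Tword (gamma_word (j-1) @ [j]) (Eneg_partial i (j-1)) = qc q (Eneg_partial i (j-1)) (E j)"
proof -
  define w where "w = gamma_word (j-1) @ [j]"
  have w_valid: "valid_word w" unfolding w_def using assms by (auto intro: valid_gamma_word)
  have jn: "j \<in> {1..n}" using assms by auto
  have P1: "Tword w (E m) = E m" if "1 \<le> m" "m + 2 \<le> j" for m
  proof -
    have "T j (E m) = E m" using that assms by (intro T_E_distant) auto
    thus ?thesis unfolding w_def using that assms Tword_gamma_E_fixed[of m "j-1"] by (simp add: Tword_append)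
  qed
  have P2: "Tword w (E (j-1)) = qc q (E (j-1)) (E j)"
  proof -
    have "T j (E (j-1)) = Edesc j (j-1)" using assms T_succ_E[of "j-1"] by (simp add: Edesc_step Edesc_same)
    moreover have "Tword (gamma_word (j-1)) (Edesc j (j-1)) = qc q (Edesc (j-1) (j-1)) (E j)"
    proof -
      have e1: "j - 2 + 1 = j - 1" using assms by arith
      have "1 \<le> j - 2" "j - 2 + 2 \<le> j" using assms by arith+
      from Tword_gamma_Edesc[OF this assms(3)] show ?thesis unfolding e1 .
    qed
    ultimately show ?thesis unfolding w_def by (simp add: Tword_append Edesc_same)
  qed
  have P3: "Tword w (Edesc (j-1) 2) = qc q (Edesc (j-1) 2) (E j)"
  proof (cases "j = 3")
    case True thus ?thesis using P2 by (simp add: Edesc_same)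
  next
    case False
    hence j4: "4 \<le> j" using assms by simp
    have P5: "Tword w (Edesc (j-2) 2) = Edesc (j-2) 2" using j4 by (intro Tword_Edesc_fixed w_valid P1) auto
    have e: "j - 1 - 1 = j - 2" by arith
    have rs: "Edesc (j-1) 2 = qc q (E (j-1)) (Edesc (j-2) 2)"
      using j4 Edesc_step[of 2 "j-1"] unfolding e by simp
    have "Tword w (Edesc (j-1) 2) = qc q (qc q (E (j-1)) (E j)) (Edesc (j-2) 2)"
      unfolding rs by (simp add: Tword_qc w_valid P2 P5)
    also have "\<dots> = qc q (qc q (E (j-1)) (Edesc (j-2) 2)) (E j)"
      using j4 assms by (intro qc_right_exchange commutes_E_Edesc) auto
    also have "\<dots> = qc q (Edesc (j-1) 2) (E j)" unfolding rs ..
    finally show ?thesis .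
  qed
  have P6: "Tword w (qc (q^2) (Edesc (j-1) 2) (E 1)) = qc q (qc (q^2) (Edesc (j-1) 2) (E 1)) (E j)"
  proof -
    have "Tword w (qc (q^2) (Edesc (j-1) 2) (E 1)) = qc (q^2) (qc q (Edesc (j-1) 2) (E j)) (E 1)"
      using assms by (simp add: Tword_qc w_valid P3 P1)
    also have "\<dots> = qc q (qc (q^2) (Edesc (j-1) 2) (E 1)) (E j)"
      using assms by (intro qc_right_exchange commutes_E_distant) auto
    finally show ?thesis .
  qed
  show ?thesis
  proof (cases "i = 1")
    case True thus ?thesis using P6 by (simp add: Eneg_partial_def w_def)
  next
    case False
    hence i2: "2 \<le> i" using assms by simp
    have u: "Eneg_partial i (j-1) = qc q (qc (q^2) (Edesc (j-1) 2) (E 1)) (Easc 2 i)"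
    proof -
      have "\<not> (j - 1 \<le> i)" using assms by arith
      thus ?thesis using False by (simp add: Eneg_partial_def)
    qed
    have P4: "Tword w (Easc 2 i) = Easc 2 i" using i2 assms by (intro Tword_Easc_fixed w_valid P1) auto
    have "Tword w (Eneg_partial i (j-1)) = qc q (qc q (qc (q^2) (Edesc (j-1) 2) (E 1)) (E j)) (Easc 2 i)"
      unfolding u by (simp add: Tword_qc w_valid P6 P4)
    also have "\<dots> = qc q (Eneg_partial i (j-1)) (E j)"
      unfolding u using i2 assms by (intro qc_right_exchange commutes_E_Easc) auto
    finally show ?thesis unfolding w_def .
  qed
qed

section \<open>The root vectors\<close>

lemma Epos_Tword: "Epos T E i j = Tword (Gword (j - 1) @ rev [i+2..<j+1]) (E (i + 1))"
  by (simp add: Epos_def Tword_def)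
lemma Eneg_Tword: "Eneg T E i j = Tword (Gword (j - 1) @ rev [2..<j+1] @ [1] @ [2..<i+1]) (E (i + 1))"
  by (simp add: Eneg_def Tword_def)
lemma Ediag_Tword: "Ediag T E j = Tword (Gword (j - 1) @ rev [2..<j+1]) (E 1)"
  by (simp add: Ediag_def Tword_def)

lemma Tword_rev_upt_Edesc: assumes "1 \<le> i" "i + 1 \<le> j" "j \<le> n"
  shows "Tword (rev [i+2..<j+1]) (E (i+1)) = Edesc j (i+1)"
  using assms
proof (induction j)
  case 0 thus ?case by simp
next
  case (Suc j)
  show ?case
  proof (cases "j = i")
    case True thus ?thesis by (simp add: Edesc_same)
  next
    case False
    hence "i + 1 \<le> j" using Suc by simp
    thus ?thesis using Suc T_Edesc_extend[of "i+1" j] by simp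
  qed
qed

lemma Gword_pred: assumes "2 \<le> j" shows "Gword (j - 1) = Gword (j - 2) @ gamma_word (j - 1)"
proof -
  have "j - 1 = Suc (j - 2)" using assms by arith
  thus ?thesis using Gword_Suc[of "j-2"] by simp
qed

lemma Epos_Edesc: assumes "1 \<le> i" "i + 1 \<le> j" "j \<le> n"
  shows "Epos T E i j = Tword (Gword (j-1)) (Edesc j (i+1))"
  unfolding Epos_Tword using Tword_rev_upt_Edesc[OF assms] by (simp add: Tword_append del: upt_Suc)

lemma Epos_recursion: assumes "1 \<le> i" "i + 2 \<le> j" "j \<le> n"
  shows "Epos T E i j = qc q (Epos T E i (j-1)) (E j)"
proof -
  have ok: "valid_word (Gword (j-2))" using assms by (intro valid_Gword) auto
  have "Epos T E i j = Tword (Gword (j-2)) (Tword (gamma_word (j-1)) (Edesc j (i+1)))"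
    using assms Epos_Edesc[of i j] Gword_pred[of j] by (simp add: Tword_append)
  also have "\<dots> = Tword (Gword (j-2)) (qc q (Edesc (j-1) (i+1)) (E j))"
    using assms Tword_gamma_Edesc by simp
  also have "\<dots> = qc q (Tword (Gword (j-2)) (Edesc (j-1) (i+1))) (E j)"
    using assms ok by (simp add: Tword_qc Tword_Gword_E_fixed)
  also have "Tword (Gword (j-2)) (Edesc (j-1) (i+1)) = Epos T E i (j-1)"
  proof -
    have e: "j - 1 - 1 = j - 2" by arith
    show ?thesis using assms Epos_Edesc[of i "j-1"] unfolding e by simp
  qed
  finally show ?thesis .
qed

lemma Eneg_recursion: assumes "1 \<le> i" "i + 2 \<le> j" "j \<le> n"
  shows "Eneg T E i j = qc q (Eneg T E i (j-1)) (E j)"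
proof -
  define U where "U = Tword (rev [2..<j] @ [1] @ [2..<i+1]) (E (i+1))"
  have ok: "valid_word (Gword (j-2))" using assms by (intro valid_Gword) auto
  have U: "U = Eneg_partial i (j-1)" unfolding U_def using Tword_Eneg_partial[OF assms] .
  have r: "rev [2..<j+1] = j # rev [2..<j]" using assms by simp
  have "Eneg T E i j = Tword (Gword (j-2)) (Tword (gamma_word (j-1) @ [j]) U)"
    unfolding Eneg_Tword U_def r using assms Gword_pred[of j] by (simp add: Tword_append del: upt_Suc)
  also have "\<dots> = Tword (Gword (j-2)) (qc q U (E j))" using Tword_gamma_Eneg_partial[OF assms] U by simp
  also have "\<dots> = qc q (Tword (Gword (j-2)) U) (E j)"
    using assms ok by (simp add: Tword_qc Tword_Gword_E_fixed)
  also have "Tword (Gword (j-2)) U = Eneg T E i (j-1)"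
  proof -
    have e: "j - 1 - 1 = j - 2" by arith
    have e2: "j - 1 + 1 = j" using assms by arith
    show ?thesis unfolding Eneg_Tword U_def e e2 by (simp add: Tword_append del: upt_Suc)
  qed
  finally show ?thesis .
qed

lemma Epos_1_2: "Epos T E 1 2 = qc (q^2) (E 1) (E 2)"
  unfolding Epos_Tword by (simp add: Gword_def gamma_word_def T1_E2)

lemma Tword_rev_upt_E2: assumes "2 \<le> j" "j \<le> n" shows "Tword (rev [3..<j+1]) (E 2) = Edesc j 2"
  using Tword_rev_upt_Edesc[of 1 j] assms by (simp add: numeral_3_eq_3)

lemma Tword_rev_upt_E1: "Tword (rev [3..<j+1]) (E 1) = E 1" if "j \<le> n" for j
  using that by (intro Tword_rev_upt_fixed T_E_distant) auto

lemma Ediag_formula: assumes "2 \<le> j" "j \<le> n"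
  shows "Ediag T E j = smul (inverse (qnum q 2)) (Epos T E 1 j * Eneg T E 1 j - Eneg T E 1 j * Epos T E 1 j)"
proof -
  define t where "t = inverse (qnum q 2)"
  define W where "W = Gword (j-1)"
  have ok: "valid_word W" unfolding W_def using assms by (intro valid_Gword) auto
  have ok3: "valid_word (rev [3..<j+1])" using assms by (auto simp: valid_word_def)
  have r2: "rev [2..<j+1] = rev [3..<j+1] @ [2]"
  proof -
    have "[2..<j+1] = 2 # [3..<j+1]"
      using assms upt_conv_Cons[of 2 "j+1"] by (simp add: numeral_3_eq_3 del: upt_Suc)
    thus ?thesis by simp
  qed
  have A: "Epos T E 1 j = Tword W (Edesc j 2)"
    unfolding W_def using Epos_Edesc[of 1 j] assms by (simp add: numeral_2_eq_2)
  have B: "Eneg T E 1 j = Tword W (qc (q^2) (Edesc j 2) (E 1))"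
  proof -
    have "Eneg T E 1 j = Tword W (Tword (rev [3..<j+1]) (T 2 (T 1 (E 2))))"
      unfolding Eneg_Tword W_def r2 by (simp add: Tword_append del: upt_Suc)
    also have "T 2 (T 1 (E 2)) = qc (q^2) (E 2) (E 1)" by (simp add: T1_E2 T2_qc_E1_E2[unfolded E21_def])
    also have "Tword (rev [3..<j+1]) (qc (q^2) (E 2) (E 1)) = qc (q^2) (Edesc j 2) (E 1)"
      unfolding Tword_qc[OF ok3] Tword_rev_upt_E2[OF assms] Tword_rev_upt_E1[OF assms(2)] ..
    finally show ?thesis .
  qed
  have C: "Ediag T E j = Tword W (smul t (qc 1 (Edesc j 2) (qc (q^2) (Edesc j 2) (E 1))))"
  proof -
    have "Ediag T E j = Tword W (Tword (rev [3..<j+1]) (T 2 (E 1)))"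
      unfolding Ediag_Tword W_def r2 by (simp add: Tword_append del: upt_Suc)
    also have "T 2 (E 1) = smul t (qc 1 (E 2) (qc (q^2) (E 2) (E 1)))" using T2_E1 by (simp add: t_def)
    also have "Tword (rev [3..<j+1]) (smul t (qc 1 (E 2) (qc (q^2) (E 2) (E 1)))) = smul t (qc 1 (Edesc j 2) (qc (q^2) (Edesc j 2) (E 1)))"
      unfolding Tword_smul[OF ok3] Tword_qc[OF ok3] Tword_rev_upt_E2[OF assms] Tword_rev_upt_E1[OF assms(2)] ..
    finally show ?thesis .
  qed
  show ?thesis unfolding C A B t_def[symmetric] qc_def using ok by (simp add: Tword_smul Tword_mult Tword_diff)
qed

definition Wneg :: "nat \<Rightarrow> nat list" where
  "Wneg k = Gword (k - 1) @ rev [2..<k+1] @ [1] @ [2..<k]"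

definition gamma_prefix :: "nat \<Rightarrow> nat list" where
  "gamma_prefix k = rev [2..<k+1] @ [1] @ [2..<k]"

lemma Wneg_eq: "Wneg k = Gword (k - 1) @ gamma_prefix k"
  by (simp add: Wneg_def gamma_prefix_def)

lemma gamma_word_eq_prefix: "2 \<le> k \<Longrightarrow> gamma_word k = gamma_prefix k @ [k]"
  by (simp add: gamma_word_def gamma_prefix_def)

lemma valid_gamma_prefix: "k \<le> n \<Longrightarrow> valid_word (gamma_prefix k)"
  using n_ge by (auto simp: gamma_prefix_def valid_word_def)

lemma valid_Wneg: "k \<le> n \<Longrightarrow> valid_word (Wneg k)"
  unfolding Wneg_def using valid_Gword[of "k-1"] n_ge by (auto simp: valid_word_def)

lemma Tword_gamma_prefix_E_succ: assumes "2 \<le> k" "k + 1 \<le> n"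
  shows "Tword (gamma_prefix k) (E (k+1)) = qc q (E k) (E (k+1))"
proof -
  have "gamma_prefix k = k # (rev [2..<k] @ [1] @ [2..<k])" using assms by (simp add: gamma_prefix_def)
  moreover have "Tword (rev [2..<k] @ [1] @ [2..<k]) (E (k+1)) = E (k+1)"
    using assms by (intro Tword_fixed T_E_distant) auto
  ultimately show ?thesis using assms T_E_succ[of k] by simp
qed

lemma Tword_Gword_E_self:
  assumes "2 \<le> m" "m \<le> n" "Tword (Wneg m) (F m) = F m" "Tword (Wneg m) (Kinv m) = Kinv m"
  shows "Tword (Gword m) (E m) = - (F m * Kinv m)"
proof -
  have "Gword m = Wneg m @ [m]"
  proof -
    have "m = Suc (m - 1)" using assms by arith
    hence "Gword m = Gword (m-1) @ gamma_word m" using Gword_Suc[of "m-1"] by simp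
    thus ?thesis using assms by (simp add: Wneg_eq gamma_word_eq_prefix)
  qed
  moreover have "m \<in> {1..n}" using assms by auto
  ultimately show ?thesis
    using assms valid_Wneg[of m] by (simp add: Tword_append T_E_self Tword_uminus Tword_mult)
qed

lemma Tword_Wneg_E_2: "Tword (Wneg 2) (E 2) = E 2"
proof -
  have "Tword (Wneg 2) (E 2) = T 1 (T 2 (T 1 (E 2)))" by (simp add: Wneg_def Gword_def gamma_word_def upt_rec)
  thus ?thesis by (simp add: T1_E2 T2_qc_E1_E2[unfolded E21_def] T1_qc_E2_E1)
qed

lemma Tword_Wneg_E_step: assumes "3 \<le> k" "k \<le> n" "Tword (Wneg (k-1)) (E (k-1)) = E (k-1)"
  and P: "Tword (Gword (k-1)) (E (k-1)) = - (F (k-1) * Kinv (k-1))"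
  shows "Tword (Wneg k) (E k) = E k"
proof -
  define U where "U = Tword (gamma_prefix (k-1)) (E (k-1))"
  have e1: "k - 1 - 1 = k - 2" by arith
  have e2: "k - 2 + 1 = k - 1" using assms by arith
  have e3: "k - 1 + 1 = k" using assms by arith
  have kn: "k \<in> {1..n}" and k1n: "k - 1 \<in> {1..n}" using assms by auto
  have ok1: "valid_word (Gword (k-1))" "valid_word (Gword (k-2))" using assms by (auto intro: valid_Gword)
  have i: "1 \<le> k - 2" "k - 2 + 2 \<le> k" using assms by arith+
  have wp: "Wneg k = Gword (k-1) @ [k] @ gamma_word (k-1)"
  proof -
    have "rev [2..<k+1] @ [1] @ [2..<k] = [k] @ gamma_word (k-1)"
      unfolding gamma_word_def e3 using assms by simp
    thus ?thesis unfolding Wneg_def by simp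
  qed
  have s1: "Tword (gamma_word (k-1)) (E k) = qc q U (qc q (E (k-1)) (E k))"
  proof -
    have "T (k-1) (E k) = qc q (E (k-1)) (E k)" using assms T_E_succ[of "k-1"] e3 by simp
    thus ?thesis using assms Tword_gamma_prefix_E_succ[of "k-1"] valid_gamma_prefix[of "k-1"]
      unfolding U_def e3 by (simp add: gamma_word_eq_prefix Tword_append Tword_qc)
  qed
  have s2: "T k (qc q (E (k-1)) (E k)) = E (k-1)" using assms T_succ_qc[of "k-1"] e3 by simp
  have U: "U = Eneg_partial (k-2) (k-1)"
    using Tword_Eneg_partial[OF i assms(2)] unfolding U_def gamma_prefix_def e2 e3 .
  have s3: "Tword (gamma_word (k-1) @ [k]) U = qc q U (E k)"
    using Tword_gamma_Eneg_partial[OF i assms(2)] unfolding U e2 .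
  have s4: "Tword (Gword (k-2)) U = E (k-1)"
    using assms(3) unfolding U_def Wneg_eq e1 by (simp add: Tword_append)
  have "Tword (Wneg k) (E k) = Tword (Gword (k-1)) (qc q (T k U) (E (k-1)))"
    unfolding wp using s1 s2 kn by (simp add: Tword_append T_qc)
  also have "\<dots> = qc q (Tword (Gword (k-2)) (Tword (gamma_word (k-1) @ [k]) U)) (- (F (k-1) * Kinv (k-1)))"
    using ok1 P assms Gword_pred[of k] by (simp add: Tword_qc Tword_append)
  also have "\<dots> = qc q (qc q (E (k-1)) (E k)) (- (F (k-1) * Kinv (k-1)))"
    using s3 s4 ok1 assms by (simp add: Tword_qc Tword_Gword_E_fixed)
  also have "\<dots> = T (k-1) (qc q (E k) (E (k-1)))"
    using assms T_E_succ[of "k-1"] e3 by (simp add: T_qc[OF k1n] T_E_self[OF k1n])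
  also have "\<dots> = E k" using assms T_qc_succ[of "k-1"] e3 by simp
  finally show ?thesis .
qed

section \<open>The symmetry exchanging E and F\<close>

lemma Kpow_mult_inverse: "i \<in> {1..n} \<Longrightarrow> Kpow K Kinv i m * Kpow Kinv K i m = 1"
proof -
  assume i: "i \<in> {1..n}"
  have a: "K i ^ k * Kinv i ^ k = 1" for k
  proof (induct k)
    case (Suc k)
    have "K i ^ Suc k * Kinv i ^ Suc k = K i ^ k * (K i * Kinv i) * Kinv i ^ k"
      by (simp only: power_Suc2[of "K i"] power_Suc[of "Kinv i"] mult.assoc)
    thus ?case using Suc K_Kinv[OF i] by simp
  qed simp
  have b: "Kinv i ^ k * K i ^ k = 1" for k
  proof (induct k)
    case (Suc k)
    have "Kinv i ^ Suc k * K i ^ Suc k = Kinv i ^ k * (Kinv i * K i) * K i ^ k"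
      by (simp only: power_Suc2[of "Kinv i"] power_Suc[of "K i"] mult.assoc)
    thus ?case using Suc Kinv_K[OF i] by simp
  qed simp
  show ?thesis by (simp add: Kpow_def a b)
qed

lemma T_Kinv: assumes i: "i \<in> {1..n}" and j: "j \<in> {1..n}"
  shows "T i (Kinv j) = Kpow Kinv K i (- cartan i j) * Kinv j"
proof -
  let ?A = "T i (K j)" and ?X = "Kpow Kinv K i (- cartan i j) * Kinv j"
  have AX: "?A * ?X = 1"
  proof -
    have "?A * ?X = K j * (Kpow K Kinv i (- cartan i j) * Kpow Kinv K i (- cartan i j)) * Kinv j"
      using T_K[OF i j] by (simp add: mult.assoc)
    thus ?thesis using Kpow_mult_inverse[OF i] K_Kinv[OF j] by simp
  qed
  have TA: "T i (Kinv j) * ?A = 1" using T_mult[OF i, of "Kinv j" "K j"] Kinv_K[OF j] T_one[OF i] by simp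
  have "T i (Kinv j) = T i (Kinv j) * (?A * ?X)" using AX by simp
  also have "\<dots> = ?X" using TA by (simp add: mult.assoc[symmetric])
  finally show ?thesis .
qed

lemma Uq_relations_opposite:
  "Uq_relations of_k_opp n (inverse q) (\<lambda>i. Opp (F i)) (\<lambda>i. Opp (E i)) (\<lambda>i. Opp (Kinv i)) (\<lambda>i. Opp (K i))"
proof -
  have r1: "\<forall>i\<in>{1..n}. \<forall>j\<in>{1..n}.
        Opp (Kinv i) * Opp (Kinv j) = Opp (Kinv j) * Opp (Kinv i) \<and>
        Opp (Kinv i) * Opp (K j) = Opp (K j) * Opp (Kinv i) \<and>
        Opp (K i) * Opp (K j) = Opp (K j) * Opp (K i)"
    using K_commute by (simp add: opp_eq_iff)
  have r2: "\<forall>i\<in>{1..n}. Opp (Kinv i) * Opp (K i) = 1 \<and> Opp (K i) * Opp (Kinv i) = 1"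
    using K_Kinv Kinv_K by (simp add: opp_eq_iff)
  have r3: "\<forall>i\<in>{1..n}. \<forall>j\<in>{1..n}. Opp (Kinv i) * Opp (F j) * Opp (K i)
        = of_k_opp (qi (inverse q) i powi cartan i j) * Opp (F j)"
    using K_F_Kinv
    by (simp add: opp_eq_iff qi_inverse power_int_inverse power_int_minus mult.assoc mult_of_k_eq_smul)
  have r4: "\<forall>i\<in>{1..n}. \<forall>j\<in>{1..n}. Opp (Kinv i) * Opp (E j) * Opp (K i)
        = of_k_opp (qi (inverse q) i powi (- cartan i j)) * Opp (E j)"
    using K_E_Kinv
    by (simp add: opp_eq_iff qi_inverse power_int_inverse power_int_minus mult.assoc mult_of_k_eq_smul)
  have r5: "Opp (F i) * Opp (E j) - Opp (E j) * Opp (F i) =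
        (if i = j then of_k_opp (inverse (qi (inverse q) i - inverse (qi (inverse q) i)))
           * (Opp (Kinv i) - Opp (K i)) else 0)"
    if i: "i \<in> {1..n}" and j: "j \<in> {1..n}" for i j
  proof (cases "i = j")
    case True
    have "inverse (inverse (qi q i) - qi q i) = - inverse (qi q i - inverse (qi q i))"
      by (metis inverse_minus_eq minus_diff_eq)
    thus ?thesis using True E_F_commutator[OF i i]
      by (simp add: opp_eq_iff qi_inverse mult_of_k_eq_smul algebra_simps)
  next
    case False
    thus ?thesis using E_F_commutator[OF j i] by (simp add: opp_eq_iff)
  qed
  show ?thesis
    unfolding Uq_relations_def using r1 r2 r3 r4 r5 serre_opposite[OF serre_F] serre_opposite[OF serre_E]
    by blast
qed

lemma lusztig_T_opposite:
  "lusztig_T of_k_opp n (inverse q) (\<lambda>i. Opp (F i)) (\<lambda>i. Opp (E i)) (\<lambda>i. Opp (Kinv i)) (\<lambda>i. Opp (K i))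
     (\<lambda>i x. Opp (T i (un x)))"
  unfolding lusztig_T_def
proof (intro ballI conjI allI impI)
  fix i assume i: "i \<in> {1..n}"
  show "Opp (T i (un (x + y))) = Opp (T i (un x)) + Opp (T i (un y))" for x y
    using i by (simp add: opp_eq_iff T_add)
  show "Opp (T i (un (x * y))) = Opp (T i (un x)) * Opp (T i (un y))" for x y
    using i by (simp add: opp_eq_iff T_mult)
  show "Opp (T i (un 1)) = 1" using i by (simp add: opp_eq_iff T_one)
  show "Opp (T i (un (of_k_opp c))) = of_k_opp c" for c using i by (simp add: opp_eq_iff T_of_k)
  show "Opp (T i (un (Opp (Kinv j)))) =
      Opp (Kinv j) * Kpow (\<lambda>i. Opp (Kinv i)) (\<lambda>i. Opp (K i)) i (- cartan i j)"
    if j: "j \<in> {1..n}" for j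
    using i j by (simp add: opp_eq_iff T_Kinv Kpow_def)
  show "Opp (T i (un (Opp (F i)))) = - (Opp (E i) * Opp (K i))"
    using i by (simp add: opp_eq_iff T_F_self)
  show "Opp (T i (un (Opp (E i)))) = - (Opp (Kinv i) * Opp (F i))"
    using i by (simp add: opp_eq_iff T_E_self)
  show "Opp (T i (un (Opp (F j)))) =
        (\<Sum>r = 0..nat (- cartan i j). of_k_opp ((-1) ^ r * qi (inverse q) i ^ r) *
            dpow of_k_opp (qi (inverse q) i) (Opp (F i)) (nat (- cartan i j) - r) * Opp (F j) *
            dpow of_k_opp (qi (inverse q) i) (Opp (F i)) r)"
    if j: "j \<in> {1..n}" "j \<noteq> i" for j
    using i j by (simp add: opp_eq_iff un_sum dpow_opp_qi dpow_opp T_F_other qi_inverse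
        of_k_mult_eq_smul mult_of_k_eq_smul mult.assoc power_inverse)
  show "Opp (T i (un (Opp (E j)))) =
        (\<Sum>r = 0..nat (- cartan i j). of_k_opp ((-1) ^ r * inverse (qi (inverse q) i) ^ r) *
            dpow of_k_opp (qi (inverse q) i) (Opp (E i)) r * Opp (E j) *
            dpow of_k_opp (qi (inverse q) i) (Opp (E i)) (nat (- cartan i j) - r))"
    if j: "j \<in> {1..n}" "j \<noteq> i" for j
    using i j by (simp add: opp_eq_iff un_sum dpow_opp_qi dpow_opp T_E_other qi_inverse
        of_k_mult_eq_smul mult_of_k_eq_smul mult.assoc power_inverse)
qed

text \<open>This symmetry transfers statements about the E_i to the F_i.\<close>
lemma uq_sp_opposite: "uq_sp of_k_opp (inverse q) n (\<lambda>i. Opp (F i)) (\<lambda>i. Opp (E i))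
     (\<lambda>i. Opp (Kinv i)) (\<lambda>i. Opp (K i)) (\<lambda>i x. Opp (T i (un x)))"
proof (rule uq_sp.intro[OF central_scalars_opposite], unfold_locales)
  show "inverse q \<noteq> 0" using q_nz by simp
  show "\<forall>m::nat. m > 0 \<longrightarrow> inverse q ^ m \<noteq> 1"
    using q_not_root by (metis inverse_1 power_inverse inverse_inverse_eq)
  show "n \<ge> 2" by (rule n_ge)
qed (fact Uq_relations_opposite, fact lusztig_T_opposite)

section \<open>Action on the Cartan part\<close>

abbreviation Kp :: "nat \<Rightarrow> int \<Rightarrow> 'a" where "Kp i m \<equiv> Kpow K Kinv i m"

lemma commutes_Kpow: assumes "i \<in> {1..n}" "j \<in> {1..n}" shows "commutes (Kp i a) (Kp j b)"
proof -
  have base: "commutes x y" if "x \<in> {K i, Kinv i}" "y \<in> {K j, Kinv j}" for x y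
    using that K_commute[OF assms] K_commute[OF assms(2,1)] by (auto simp: commutes_def)
  have "commutes x (Kp j b)" if "x \<in> {K i, Kinv i}" for x
    using that base by (auto simp: Kpow_def intro!: commutes_power)
  hence "commutes (Kp j b) x" if "x \<in> {K i, Kinv i}" for x using that commutes_sym by blast
  hence "commutes (Kp j b) (Kp i a)" by (auto simp: Kpow_def intro!: commutes_power)
  thus ?thesis by (rule commutes_sym)
qed

lemma K_Kinv_power: "i \<in> {1..n} \<Longrightarrow> K i ^ (m + l) * Kinv i ^ l = K i ^ m"
proof (induct l)
  case (Suc l)
  have "K i ^ (m + Suc l) * Kinv i ^ Suc l = K i ^ (m + l) * (K i * Kinv i) * Kinv i ^ l"
    by (simp only: add_Suc_right power_Suc2[of "K i"] power_Suc[of "Kinv i"] mult.assoc)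
  thus ?case using Suc K_Kinv by simp
qed simp
lemma K_Kinv_power': "i \<in> {1..n} \<Longrightarrow> K i ^ l * Kinv i ^ (m + l) = Kinv i ^ m"
proof (induct l)
  case (Suc l)
  have "K i ^ Suc l * Kinv i ^ (m + Suc l) = K i ^ l * (K i * Kinv i) * Kinv i ^ (m + l)"
    by (simp only: add_Suc_right power_Suc2[of "K i"] power_Suc[of "Kinv i"] mult.assoc)
  thus ?case using Suc K_Kinv by simp
qed simp
lemma Kinv_K_power: "i \<in> {1..n} \<Longrightarrow> Kinv i ^ (m + l) * K i ^ l = Kinv i ^ m"
proof (induct l)
  case (Suc l)
  have "Kinv i ^ (m + Suc l) * K i ^ Suc l = Kinv i ^ (m + l) * (Kinv i * K i) * K i ^ l"
    by (simp only: add_Suc_right power_Suc2[of "Kinv i"] power_Suc[of "K i"] mult.assoc)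
  thus ?case using Suc Kinv_K by simp
qed simp
lemma Kinv_K_power': "i \<in> {1..n} \<Longrightarrow> Kinv i ^ l * K i ^ (m + l) = K i ^ m"
proof (induct l)
  case (Suc l)
  have "Kinv i ^ Suc l * K i ^ (m + Suc l) = Kinv i ^ l * (Kinv i * K i) * K i ^ (m + l)"
    by (simp only: add_Suc_right power_Suc2[of "Kinv i"] power_Suc[of "K i"] mult.assoc)
  thus ?case using Suc Kinv_K by simp
qed simp

lemma Kpow_add: assumes i: "i \<in> {1..n}" shows "Kp i a * Kp i b = Kp i (a + b)"
proof -
  consider "0 \<le> a" "0 \<le> b" | "a < 0" "b < 0" | "0 \<le> a" "b < 0" | "a < 0" "0 \<le> b" by linarith
  thus ?thesis
  proof cases
    case 1 thus ?thesis by (simp add: Kpow_def nat_add_distrib power_add)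
  next
    case 2
    have "nat (- (a + b)) = nat (- a) + nat (- b)" using 2 by simp
    thus ?thesis using 2 by (simp add: Kpow_def power_add)
  next
    case 3
    show ?thesis
    proof (cases "0 \<le> a + b")
      case True
      have "nat a = nat (a + b) + nat (- b)" using 3 True by simp
      thus ?thesis using 3 True K_Kinv_power[OF i, of "nat (a+b)" "nat (-b)"] by (simp add: Kpow_def)
    next
      case False
      have "nat (- b) = nat (- (a + b)) + nat a" using 3 False by simp
      thus ?thesis using 3 False K_Kinv_power'[OF i, of "nat a" "nat (- (a+b))"] by (simp add: Kpow_def)
    qed
  next
    case 4
    show ?thesis
    proof (cases "0 \<le> a + b")
      case True
      have "nat b = nat (a + b) + nat (- a)" using 4 True by simp
      thus ?thesis using 4 True Kinv_K_power'[OF i, of "nat (-a)" "nat (a+b)"] by (simp add: Kpow_def)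
    next
      case False
      have "nat (- a) = nat (- (a + b)) + nat b" using 4 False by simp
      thus ?thesis using 4 False Kinv_K_power[OF i, of "nat (- (a+b))" "nat b"] by (simp add: Kpow_def)
    qed
  qed
qed

lemma Kpow_0[simp]: "Kp i 0 = 1" by (simp add: Kpow_def)
lemma Kpow_1: "Kp i 1 = K i" by (simp add: Kpow_def)
lemma Kpow_neg_1: "Kp i (-1) = Kinv i" by (simp add: Kpow_def)

fun Kmono_list :: "nat list \<Rightarrow> (nat \<Rightarrow> int) \<Rightarrow> 'a" where
  "Kmono_list [] v = 1"
| "Kmono_list (j # js) v = Kp j (v j) * Kmono_list js v"

lemma commutes_Kmono_list:
  "i \<in> {1..n} \<Longrightarrow> set js \<subseteq> {1..n} \<Longrightarrow>
    commutes (Kp i a) (Kmono_list js v)"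
proof (induct js)
  case Nil thus ?case by (simp add: commutes_def)
next
  case (Cons j js) thus ?case by (simp add: commutes_mult commutes_Kpow)
qed

lemma Kmono_list_mult:
  "set js \<subseteq> {1..n} \<Longrightarrow>
    Kmono_list js v * Kmono_list js w = Kmono_list js (\<lambda>j. v j + w j)"
proof (induct js)
  case (Cons j js)
  hence j: "j \<in> {1..n}" and js: "set js \<subseteq> {1..n}" by auto
  have "Kmono_list (j # js) v * Kmono_list (j # js) w = Kp j (v j) * (Kmono_list js v * Kp j (w j)) * Kmono_list js w"
    by (simp add: mult.assoc)
  also have "Kmono_list js v * Kp j (w j) = Kp j (w j) * Kmono_list js v"
    using commutes_Kmono_list[OF j js] by (simp add: commutes_def)
  also have "Kp j (v j) * (Kp j (w j) * Kmono_list js v) * Kmono_list js w = Kp j (v j + w j) * (Kmono_list js v * Kmono_list js w)"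
    using Kpow_add[OF j] by (simp add: mult.assoc[symmetric])
  finally show ?case using Cons js by simp
qed simp

lemma Kmono_list_cong:
  "(\<And>j. j \<in> set js \<Longrightarrow> v j = w j) \<Longrightarrow> Kmono_list js v = Kmono_list js w"
  by (induct js) auto

lemma Kmono_list_zero: "Kmono_list js (\<lambda>_. 0) = 1" by (induct js) auto

lemma Kmono_list_delta:
  "distinct js \<Longrightarrow> i \<in> set js \<Longrightarrow>
    Kmono_list js (\<lambda>j. if j = i then c else 0) = Kp i c"
proof (induct js)
  case (Cons j js)
  show ?case
  proof (cases "j = i")
    case True
    hence "Kmono_list js (\<lambda>j. if j = i then c else 0) = Kmono_list js (\<lambda>_. 0)"
      using Cons by (intro Kmono_list_cong) auto
    thus ?thesis using True by (simp add: Kmono_list_zero)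
  next
    case False thus ?thesis using Cons by simp
  qed
qed simp

text \<open>Kmono v is the monomial K_1^{v 1} ... K_n^{v n}; the T_i act on exponent vectors by
  the simple reflections.\<close>
definition Kmono :: "(nat \<Rightarrow> int) \<Rightarrow> 'a" where "Kmono v = Kmono_list [1..<n+1] v"

lemma set_upt_1_n: "set [1..<n+1] \<subseteq> {1..n}" by auto
lemma Kmono_mult:
  "Kmono v * Kmono w = Kmono (\<lambda>j. v j + w j)"
  unfolding Kmono_def using Kmono_list_mult[OF set_upt_1_n] .
lemma Kmono_cong: "(\<And>j. j \<in> {1..n} \<Longrightarrow> v j = w j) \<Longrightarrow> Kmono v = Kmono w"
  unfolding Kmono_def by (rule Kmono_list_cong) auto
lemma Kmono_delta: "i \<in> {1..n} \<Longrightarrow> Kmono (\<lambda>j. if j = i then c else 0) = Kp i c"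
  unfolding Kmono_def by (rule Kmono_list_delta) auto
lemma Kmono_zero: "Kmono (\<lambda>_. 0) = 1" unfolding Kmono_def by (rule Kmono_list_zero)
lemma Kmono_power: "Kmono v ^ m = Kmono (\<lambda>j. int m * v j)"
proof (induct m)
  case 0 thus ?case using Kmono_zero by simp
next
  case (Suc m)
  have "Kmono v ^ Suc m = Kmono v * Kmono (\<lambda>j. int m * v j)" using Suc by (simp add: power_Suc)
  also have "\<dots> = Kmono (\<lambda>j. int (Suc m) * v j)" by (simp add: Kmono_mult algebra_simps)
  finally show ?case .
qed

definition delta :: "nat \<Rightarrow> nat \<Rightarrow> int" where "delta i l = (if l = i then 1 else 0)"

lemma T_Kpow: assumes i: "i \<in> {1..n}" and j: "j \<in> {1..n}"
  shows "T i (Kp j c) = Kmono (\<lambda>l. c * (delta j l - cartan i j * delta i l))"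
proof -
  have TK: "T i (K j) = Kmono (\<lambda>l. delta j l - cartan i j * delta i l)"
  proof -
    have "T i (K j) = Kmono (\<lambda>l. if l = j then 1 else 0) * Kmono (\<lambda>l. if l = i then - cartan i j else 0)"
      using T_K[OF i j] Kmono_delta[OF j, of 1] Kmono_delta[OF i, of "- cartan i j"] by (simp add: Kpow_1)
    thus ?thesis by (simp add: Kmono_mult delta_def) (rule Kmono_cong, simp)
  qed
  have TKi: "T i (Kinv j) = Kmono (\<lambda>l. - (delta j l - cartan i j * delta i l))"
  proof -
    have kp: "Kpow Kinv K i (- cartan i j) = Kp i (cartan i j)" by (simp add: Kpow_def)
    have "T i (Kinv j) = Kmono (\<lambda>l. if l = i then cartan i j else 0) * Kmono (\<lambda>l. if l = j then -1 else 0)"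
      using T_Kinv[OF i j] Kmono_delta[OF j, of "-1"] Kmono_delta[OF i, of "cartan i j"] kp by (simp add: Kpow_neg_1)
    thus ?thesis by (simp add: Kmono_mult delta_def) (rule Kmono_cong, simp)
  qed
  show ?thesis
  proof (cases "0 \<le> c")
    case True
    have "T i (Kp j c) = T i (K j) ^ nat c" using True by (simp add: Kpow_def T_power[OF i])
    also have "\<dots> = Kmono (\<lambda>l. c * (delta j l - cartan i j * delta i l))"
      using True by (simp add: TK Kmono_power)
    finally show ?thesis .
  next
    case False
    have "T i (Kp j c) = T i (Kinv j) ^ nat (- c)" using False by (simp add: Kpow_def T_power[OF i])
    also have "\<dots> = Kmono (\<lambda>l. c * (delta j l - cartan i j * delta i l))"
      using False by (simp add: TKi Kmono_power) (rule Kmono_cong, simp add: algebra_simps)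
    finally show ?thesis .
  qed
qed

lemma T_Kmono_list: "i \<in> {1..n} \<Longrightarrow> set js \<subseteq> {1..n} \<Longrightarrow>
   T i (Kmono_list js v) = Kmono (\<lambda>l. \<Sum>j\<leftarrow>js. v j * (delta j l - cartan i j * delta i l))"
proof (induct js)
  case Nil thus ?case using Kmono_zero T_one by simp
next
  case (Cons j js)
  hence j: "j \<in> {1..n}" by simp
  have "T i (Kmono_list (j # js) v) = T i (Kp j (v j)) * T i (Kmono_list js v)"
    using Cons by (simp add: T_mult)
  also have "\<dots> = Kmono (\<lambda>l. v j * (delta j l - cartan i j * delta i l)) *
       Kmono (\<lambda>l. \<Sum>j\<leftarrow>js. v j * (delta j l - cartan i j * delta i l))"
    using Cons j T_Kpow by simp
  finally show ?case by (simp add: Kmono_mult)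
qed

definition cartan_pair :: "nat \<Rightarrow> (nat \<Rightarrow> int) \<Rightarrow> int" where
  "cartan_pair i v = (\<Sum>j = 1..n. cartan i j * v j)"

definition reflect :: "nat \<Rightarrow> (nat \<Rightarrow> int) \<Rightarrow> nat \<Rightarrow> int" where
  "reflect i v l = v l - delta i l * cartan_pair i v"

lemma T_Kmono: assumes i: "i \<in> {1..n}" shows "T i (Kmono v) = Kmono (reflect i v)"
proof -
  have "T i (Kmono v) = Kmono (\<lambda>l. \<Sum>j\<leftarrow>[1..<n+1]. v j * (delta j l - cartan i j * delta i l))"
    unfolding Kmono_def using T_Kmono_list[OF i set_upt_1_n] by (simp add: Kmono_def)
  also have "\<dots> = Kmono (reflect i v)"
  proof (rule Kmono_cong)
    fix l assume l: "l \<in> {1..n}"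
    have "(\<Sum>j\<leftarrow>[1..<n+1]. v j * (delta j l - cartan i j * delta i l)) = (\<Sum>j = 1..n. v j * (delta j l - cartan i j * delta i l))"
    proof -
      have e: "{1..<n+1} = {1..n}" by auto
      show ?thesis unfolding sum_set_upt_conv_sum_list_nat[symmetric] set_upt e ..
    qed
    also have "\<dots> = (\<Sum>j = 1..n. v j * delta j l) - delta i l * cartan_pair i v"
      by (simp add: cartan_pair_def algebra_simps sum_subtractf sum_distrib_left)
    also have "(\<Sum>j = 1..n. v j * delta j l) = v l"
    proof -
      have "(\<Sum>j = 1..n. v j * delta j l) = (\<Sum>j = 1..n. if l = j then v l else 0)"
        by (rule sum.cong) (auto simp: delta_def)
      thus ?thesis using l by simp
    qed
    finally show "(\<Sum>j\<leftarrow>[1..<n+1]. v j * (delta j l - cartan i j * delta i l)) = reflect i v l"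
      by (simp add: reflect_def)
  qed
  finally show ?thesis .
qed

lemma cartan_split:
  "1 \<le> i \<Longrightarrow> cartan i j = (if j = i then 2 else 0) + (if j = i + 1 then -1 else 0)
   + (if j + 1 = i then (if i = 2 then -2 else -1) else 0)"
  by (auto simp: cartan_def)

lemma cartan_pair_formula: assumes "1 \<le> i" "i \<le> n"
  shows "cartan_pair i v = 2 * v i - (if i + 1 \<le> n then v (i+1) else 0)
     - (if i = 2 then 2 * v 1 else if 3 \<le> i then v (i - 1) else 0)"
proof -
  have "cartan_pair i v = (\<Sum>j = 1..n. (if j = i then 2 * v i else 0) + (if j = i + 1 then - v (i+1) else 0)
     + (if j = i - 1 \<and> 2 \<le> i then (if i = 2 then -2 else -1) * v (i - 1) else 0))"
    unfolding cartan_pair_def using assms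
    by (intro sum.cong refl) (auto simp: cartan_split)
  also have "\<dots> = 2 * v i - (if i + 1 \<le> n then v (i+1) else 0)
     - (if i = 2 then 2 * v 1 else if 3 \<le> i then v (i - 1) else 0)"
    using assms by (simp add: sum.distrib sum.delta' split: if_split_asm) (auto simp: One_nat_def)
  finally show ?thesis .
qed

text \<open>Exponent vectors of K_l K_{l+1} ... K_k and of K_1 K_2^2 ... K_l^2 K_{l+1} ... K_k, the
  monomials through which the word of E_{-(k-1),k} moves K_k.\<close>
definition wt_interval :: "nat \<Rightarrow> nat \<Rightarrow> nat \<Rightarrow> int" where
  "wt_interval k l x = (if l \<le> x \<and> x \<le> k then 1 else 0)"
definition wt_hook :: "nat \<Rightarrow> nat \<Rightarrow> nat \<Rightarrow> int" where
  "wt_hook k l x = (if x = 1 then 1 else if x \<le> l then 2 else if x \<le> k then 1 else 0)"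

lemma T_wt_interval_extend: assumes "2 \<le> m" "m + 1 \<le> k" "k \<le> n"
  shows "T m (Kmono (wt_interval k (m+1))) = Kmono (wt_interval k m)"
proof -
  have m: "m \<in> {1..n}" using assms by auto
  have c: "cartan_pair m (wt_interval k (Suc m)) = -1"
    using assms by (auto simp: cartan_pair_formula wt_interval_def)
  show ?thesis unfolding T_Kmono[OF m]
    using assms by (intro Kmono_cong) (auto simp: reflect_def c wt_interval_def delta_def)
qed

lemma T1_wt_interval: assumes "2 \<le> k" "k \<le> n"
  shows "T 1 (Kmono (wt_interval k 2)) = Kmono (wt_hook k 1)"
proof -
  have c: "cartan_pair 1 (wt_interval k 2) = -1"
    using assms by (auto simp: cartan_pair_formula wt_interval_def)
  show ?thesis unfolding T_Kmono[OF one_in]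
    using assms by (intro Kmono_cong) (auto simp: reflect_def c wt_interval_def wt_hook_def delta_def)
qed

lemma T_wt_hook_up: assumes "1 \<le> l" "l + 2 \<le> k" "k \<le> n"
  shows "T (l+1) (Kmono (wt_hook k l)) = Kmono (wt_hook k (l+1))"
proof -
  have m: "l + 1 \<in> {1..n}" using assms by auto
  have c: "cartan_pair (Suc l) (wt_hook k l) = -1" using assms by (auto simp: cartan_pair_formula wt_hook_def)
  show ?thesis unfolding T_Kmono[OF m]
    using assms by (intro Kmono_cong) (auto simp: reflect_def c wt_hook_def delta_def)
qed

lemma T_wt_hook_top: assumes "2 \<le> k" "k \<le> n"
  shows "T k (Kmono (wt_hook k (k-1))) = Kmono (wt_hook k (k-1))"
proof -
  have m: "k \<in> {1..n}" using assms by auto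
  have c: "cartan_pair k (wt_hook k (k-1)) = 0" using assms by (auto simp: cartan_pair_formula wt_hook_def)
  show ?thesis unfolding T_Kmono[OF m]
    using assms by (intro Kmono_cong) (auto simp: reflect_def c wt_hook_def delta_def)
qed

lemma T_wt_hook_down: assumes "2 \<le> l" "l + 1 \<le> k" "k \<le> n"
  shows "T l (Kmono (wt_hook k l)) = Kmono (wt_hook k (l-1))"
proof -
  have m: "l \<in> {1..n}" using assms by auto
  have c: "cartan_pair l (wt_hook k l) = 1" using assms by (auto simp: cartan_pair_formula wt_hook_def)
  show ?thesis unfolding T_Kmono[OF m]
    using assms by (intro Kmono_cong) (auto simp: reflect_def c wt_hook_def delta_def)
qed

lemma T1_wt_hook: assumes "2 \<le> k" "k \<le> n" shows "T 1 (Kmono (wt_hook k 1)) = Kmono (wt_interval k 2)"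
proof -
  have c: "cartan_pair 1 (wt_hook k 1) = 1" using assms by (auto simp: cartan_pair_formula wt_hook_def)
  show ?thesis unfolding T_Kmono[OF one_in]
    using assms by (intro Kmono_cong) (auto simp: reflect_def c wt_interval_def wt_hook_def delta_def)
qed

lemma T_wt_interval_shrink: assumes "2 \<le> l" "l + 1 \<le> k" "k \<le> n"
  shows "T l (Kmono (wt_interval k l)) = Kmono (wt_interval k (l+1))"
proof -
  have m: "l \<in> {1..n}" using assms by auto
  have c: "cartan_pair l (wt_interval k l) = 1"
    using assms by (auto simp: cartan_pair_formula wt_interval_def)
  show ?thesis unfolding T_Kmono[OF m]
    using assms by (intro Kmono_cong) (auto simp: reflect_def c wt_interval_def delta_def)
qed

lemma K_eq_Kmono: "k \<in> {1..n} \<Longrightarrow> K k = Kmono (wt_interval k k)"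
proof -
  assume k: "k \<in> {1..n}"
  have "Kmono (wt_interval k k) = Kmono (\<lambda>j. if j = k then 1 else 0)"
    by (rule Kmono_cong) (auto simp: wt_interval_def)
  thus ?thesis using Kmono_delta[OF k, of 1] by (simp add: Kpow_1)
qed

lemma Tword_upt_wt_interval: assumes "2 \<le> m" "m \<le> k" "k \<le> n"
  shows "Tword [m..<k] (Kmono (wt_interval k k)) = Kmono (wt_interval k m)"
  using assms
proof (induction "k - m" arbitrary: m)
  case 0 thus ?case by simp
next
  case (Suc d)
  hence mk: "m < k" by simp
  have "[m..<k] = m # [m+1..<k]" using mk upt_conv_Cons by simp
  hence "Tword [m..<k] (Kmono (wt_interval k k)) = T m (Kmono (wt_interval k (m+1)))"
    using Suc by (simp del: upt_Suc)
  thus ?case using T_wt_interval_extend[of m k] Suc mk by simp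
qed

lemma Tword_rev_upt_wt_interval: assumes "2 \<le> m" "m \<le> k" "k \<le> n"
  shows "Tword (rev [2..<m]) (Kmono (wt_interval k 2)) = Kmono (wt_interval k m)"
  using assms
proof (induction m)
  case 0 thus ?case by simp
next
  case (Suc m)
  show ?case
  proof (cases "m = 1")
    case True thus ?thesis by (simp add: upt_rec)
  next
    case False
    hence m2: "2 \<le> m" using Suc by simp
    have "Tword (rev [2..<Suc m]) (Kmono (wt_interval k 2)) = T m (Kmono (wt_interval k m))"
      using Suc m2 by simp
    thus ?thesis using T_wt_interval_shrink[of m k] Suc m2 by simp
  qed
qed

lemma Tword_rev_upt_wt_hook: assumes "1 \<le> m" "m + 1 \<le> k" "k \<le> n"
  shows "Tword (rev [2..<m+1]) (Kmono (wt_hook k 1)) = Kmono (wt_hook k m)"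
  using assms
proof (induction m)
  case 0 thus ?case by simp
next
  case (Suc m)
  show ?case
  proof (cases "m = 0")
    case True thus ?thesis by (simp add: upt_rec One_nat_def)
  next
    case False
    have "Tword (rev [2..<Suc m + 1]) (Kmono (wt_hook k 1)) = T (m+1) (Kmono (wt_hook k m))"
      using Suc False by simp
    thus ?thesis using T_wt_hook_up[of m k] Suc False by simp
  qed
qed

lemma Tword_upt_wt_hook: assumes "2 \<le> m" "m \<le> k" "k \<le> n"
  shows "Tword [m..<k] (Kmono (wt_hook k (k-1))) = Kmono (wt_hook k (m-1))"
  using assms
proof (induction "k - m" arbitrary: m)
  case 0 thus ?case by simp
next
  case (Suc d)
  hence mk: "m < k" by simp
  have "[m..<k] = m # [m+1..<k]" using mk upt_conv_Cons by simp
  hence "Tword [m..<k] (Kmono (wt_hook k (k-1))) = T m (Kmono (wt_hook k m))"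
    using Suc by (simp del: upt_Suc)
  thus ?case using T_wt_hook_down[of m k] Suc mk by simp
qed

lemma Tword_Gword_K_fixed: assumes "m + 2 \<le> k" "k \<le> n" shows "Tword (Gword m) (K k) = K k"
proof (rule Tword_fixed)
  fix i assume "i \<in> set (Gword m)"
  hence i: "1 \<le> i" "i + 2 \<le> k" using set_Gword assms by fastforce+
  hence c: "cartan i k = 0" by (intro cartan_distant) simp
  show "T i (K k) = K k" using T_K[of i k] i c assms by (simp add: Kpow_def)
qed

lemma Tword_Wneg_K: assumes "2 \<le> k" "k \<le> n" shows "Tword (Wneg k) (K k) = K k"
proof -
  have kn: "k \<in> {1..n}" using assms by auto
  have e: "k - 1 + 1 = k" using assms by simp
  have wp: "Wneg k = Gword (k-2) @ rev [2..<k] @ [1] @ [2..<k] @ rev [2..<k+1] @ [1] @ [2..<k]"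
    unfolding Wneg_def using Gword_pred[of k] assms by (simp add: gamma_word_def e del: upt_Suc)
  have r: "rev [2..<k+1] = k # rev [2..<k]" using assms by simp
  have s1: "Tword [2..<k] (K k) = Kmono (wt_interval k 2)"
    using Tword_upt_wt_interval[of 2 k] assms K_eq_Kmono[OF kn] by simp
  have s2: "T 1 (Kmono (wt_interval k 2)) = Kmono (wt_hook k 1)" using T1_wt_interval assms by simp
  have s3: "Tword (rev [2..<k+1]) (Kmono (wt_hook k 1)) = Kmono (wt_hook k (k-1))"
  proof -
    have "Tword (rev [2..<k]) (Kmono (wt_hook k 1)) = Kmono (wt_hook k (k-1))"
      using Tword_rev_upt_wt_hook[of "k-1" k] assms e by simp
    thus ?thesis unfolding r using T_wt_hook_top assms by simp
  qed
  have s4: "Tword [2..<k] (Kmono (wt_hook k (k-1))) = Kmono (wt_hook k 1)"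
    using Tword_upt_wt_hook[of 2 k] assms by (simp add: One_nat_def)
  have s5: "Tword (rev [2..<k]) (Kmono (wt_interval k 2)) = K k"
    using Tword_rev_upt_wt_interval[of k k] assms K_eq_Kmono[OF kn] by simp
  have s6: "Tword (Gword (k-2)) (K k) = K k" using assms by (intro Tword_Gword_K_fixed) auto
  show ?thesis unfolding wp
    by (simp only: Tword_append Tword_Cons Tword_Nil s1 s2 s3 s4 T1_wt_hook[OF assms] s5 s6)
qed

lemma Tword_one: "valid_word w \<Longrightarrow> Tword w 1 = 1" by (induct w) (auto simp: T_one)

lemma Tword_Wneg_Kinv: assumes "2 \<le> k" "k \<le> n" shows "Tword (Wneg k) (Kinv k) = Kinv k"
proof -
  have kn: "k \<in> {1..n}" using assms by auto
  have ok: "valid_word (Wneg k)" using valid_Wneg assms by simp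
  have a: "Tword (Wneg k) (Kinv k) * K k = 1"
    using Tword_mult[OF ok, of "Kinv k" "K k"] Tword_Wneg_K[OF assms] Kinv_K[OF kn] Tword_one[OF ok] by simp
  have "Tword (Wneg k) (Kinv k) = Tword (Wneg k) (Kinv k) * (K k * Kinv k)" using K_Kinv[OF kn] by simp
  also have "\<dots> = Kinv k" using a by (simp add: mult.assoc[symmetric])
  finally show ?thesis .
qed

text \<open>Simultaneous induction on k: the step for E_k needs
  T_{gamma_1} ... T_{gamma_{k-1}} (E_{k-1}) = -F_{k-1} K_{k-1}^{-1}, hence the statement for F_{k-1}
  (and for K_{k-1}) one step earlier, and the statement for F is the one for E in the opposite
  algebra.\<close>
lemma Tword_Wneg_E_F: assumes "2 \<le> k" "k \<le> n"
  shows "Tword (Wneg k) (E k) = E k \<and> Tword (Wneg k) (F k) = F k"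
proof -
  interpret op: uq_sp of_k_opp "inverse q" n "\<lambda>i. Opp (F i)" "\<lambda>i. Opp (E i)" "\<lambda>i. Opp (Kinv i)" "\<lambda>i. Opp (K i)"
    "\<lambda>i x. Opp (T i (un x))" by (rule uq_sp_opposite)
  have tr: "op.Tword w (Opp x) = Opp (Tword w x)" for w x by (induct w) simp_all
  have wp: "op.Wneg k = Wneg k" for k by (simp add: op.Wneg_def Wneg_def)
  have trE: "op.Tword (Wneg k) (Opp (F k)) = Opp (F k) \<longleftrightarrow> Tword (Wneg k) (F k) = F k" for k
    by (simp add: tr)
  have trF: "op.Tword (Wneg k) (Opp (E k)) = Opp (E k) \<longleftrightarrow> Tword (Wneg k) (E k) = E k" for k
    by (simp add: tr)
  show ?thesis using assms
  proof (induction k rule: nat_less_induct)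
    case (1 k)
    show ?case
    proof (cases "k = 2")
      case True
      have a: "Tword (Wneg 2) (E 2) = E 2" by (rule Tword_Wneg_E_2)
      have "op.Tword (op.Wneg 2) (Opp (F 2)) = Opp (F 2)" by (rule op.Tword_Wneg_E_2)
      hence b: "Tword (Wneg 2) (F 2) = F 2" using trE wp by simp
      show ?thesis using a b True by simp
    next
      case False
      hence k3: "3 \<le> k" using 1 by simp
      have IH: "Tword (Wneg (k-1)) (E (k-1)) = E (k-1) \<and> Tword (Wneg (k-1)) (F (k-1)) = F (k-1)"
        using 1 k3 by (intro 1(1)[rule_format]) auto
      have P: "Tword (Gword (k-1)) (E (k-1)) = - (F (k-1) * Kinv (k-1))"
        using Tword_Gword_E_self[of "k-1"] IH Tword_Wneg_Kinv[of "k-1"] 1 k3 by simp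
      have a: "Tword (Wneg k) (E k) = E k" using Tword_Wneg_E_step[of k] IH P 1 k3 by simp
      have IHo: "op.Tword (op.Wneg (k-1)) (Opp (F (k-1))) = Opp (F (k-1))"
        using IH trE wp by simp
      have IHo2: "op.Tword (op.Wneg (k-1)) (Opp (E (k-1))) = Opp (E (k-1))"
        using IH trF wp by simp
      have Po: "op.Tword (Gword (k-1)) (Opp (F (k-1))) = - (Opp (E (k-1)) * Opp (K (k-1)))"
        using op.Tword_Gword_E_self[of "k-1"] IHo2 op.Tword_Wneg_Kinv[of "k-1"] 1 k3 by simp
      have "op.Tword (op.Wneg k) (Opp (F k)) = Opp (F k)"
        using op.Tword_Wneg_E_step[of k] IHo Po 1 k3 by simp
      hence b: "Tword (Wneg k) (F k) = F k" using trE wp by simp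
      show ?thesis using a b by simp
    qed
  qed
qed

lemma Epos_adjacent: assumes "3 \<le> j" "j \<le> n"
  shows "Epos T E (j-1) j = qc q (E (j-1)) (Epos T E (j-2) j)"
proof -
  have W: "Tword (Wneg (j-1)) (E (j-1)) = E (j-1)" using assms Tword_Wneg_E_F[of "j-1"] by simp
  have e1: "j - 1 - 1 = j - 2" by arith
  have e2: "j - 2 + 1 = j - 1" using assms by arith
  have e3: "j - 1 + 1 = j" using assms by arith
  have ok: "valid_word (gamma_prefix (j-1))" "valid_word (Gword (j-2))"
    using assms by (auto intro: valid_Gword valid_gamma_prefix)
  have V: "Tword (gamma_prefix (j-1)) (E j) = qc q (E (j-1)) (E j)"
    using assms Tword_gamma_prefix_E_succ[of "j-1"] e3 by simp
  have A: "Epos T E (j-1) j = qc q (E (j-1)) (Tword (Gword (j-2)) (qc q (E (j-1)) (E j)))"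
  proof -
    have "Epos T E (j-1) j = Tword (Gword (j-2)) (Tword (gamma_prefix (j-1)) (T (j-1) (E j)))"
      unfolding Epos_Tword e3 using assms Gword_pred[of j] gamma_word_eq_prefix[of "j-1"]
      by (simp add: Tword_append)
    also have "T (j-1) (E j) = qc q (E (j-1)) (E j)" using assms T_E_succ[of "j-1"] e3 by simp
    finally show ?thesis
      using ok V W unfolding Wneg_eq e1 by (simp add: Tword_qc Tword_append)
  qed
  have B: "Epos T E (j-2) j = Tword (Gword (j-2)) (qc q (E (j-1)) (E j))"
  proof -
    have "1 \<le> j - 2" "j - 2 + 2 \<le> j" using assms by arith+
    note L = Tword_gamma_Edesc[OF this assms(2), unfolded e2]
    have "Epos T E (j-2) j = Tword (Gword (j-1)) (Edesc j (j-1))"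
      using Epos_Edesc[of "j-2" j] assms unfolding e2 by simp
    also have "\<dots> = Tword (Gword (j-2)) (qc q (E (j-1)) (E j))"
      using assms Gword_pred[of j] L by (simp add: Tword_append Edesc_same)
    finally show ?thesis .
  qed
  show ?thesis using A B by simp
qed

end

theorem proposition4p6:
  fixes of_k :: "'k::field_char_0 \<Rightarrow> 'a::ring_1"
    and q :: 'k and n :: nat
    and E F K Kinv :: "nat \<Rightarrow> 'a"
    and T :: "nat \<Rightarrow> 'a \<Rightarrow> 'a"
  assumes of_k_1: "of_k 1 = 1"
    and of_k_add: "\<forall>a b. of_k (a + b) = of_k a + of_k b"
    and of_k_mult: "\<forall>a b. of_k (a * b) = of_k a * of_k b"
    and of_k_central: "\<forall>c x. of_k c * x = x * of_k c"
    and q_nz: "q \<noteq> 0"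
    and q_not_root: "\<forall>m::nat. m > 0 \<longrightarrow> q ^ m \<noteq> 1"
    and n_ge: "n \<ge> 2"
    and rels: "Uq_relations of_k n q E F K Kinv"
    and lusztig: "lusztig_T of_k n q E F K Kinv T"
  shows "Epos T E 1 2 = qcomm of_k (q ^ 2) (E 1) (E 2)
    \<and> (\<forall>i j. 1 \<le> i \<and> i + 2 \<le> j \<and> j \<le> n \<longrightarrow>
          Eneg T E i j = qcomm of_k q (Eneg T E i (j - 1)) (E j)
        \<and> Epos T E i j = qcomm of_k q (Epos T E i (j - 1)) (E j))
    \<and> (\<forall>j. 3 \<le> j \<and> j \<le> n \<longrightarrow>
          Epos T E (j - 1) j = qcomm of_k q (E (j - 1)) (Epos T E (j - 2) j))
    \<and> (\<forall>j. 2 \<le> j \<and> j \<le> n \<longrightarrow>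
          Ediag T E j = of_k (inverse (qnum q 2)) *
            (Epos T E 1 j * Eneg T E 1 j - Eneg T E 1 j * Epos T E 1 j))"
proof -
  interpret uq_sp of_k q n E F K Kinv T
    by (intro uq_sp.intro central_scalars.intro uq_sp_axioms.intro) (fact assms)+
  show ?thesis
    unfolding qcomm_eq_qc
    using Epos_1_2 Epos_recursion Eneg_recursion Epos_adjacent Ediag_formula[unfolded smul_def]
    by auto
qed

end
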